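(* Let $d\ge3$, $1\le k\le d$, $q>1$, $\alpha\ge0$, and $A=\{x\in\mathbb Z^d:x_1\ge1,\dots,x_k\ge1\}$. The problem $$-\Delta u(x)\ge|x|^{-\alpha}u(x)^q\ \ (x\in A),\qquad u=0\ \text{on }\partial A,$$ admits a solution $u$ with $u(x)>0$ for all $x\in A$ if and only if $\alpha+q(d+k-2)>d+k$.
   Context: $\mathbb Z^d$ carries unit weights on nearest-neighbour edges, so $\mu(x)=2d$ and $\Delta u(x)=\frac1{2d}\sum_{y:\|y-x\|_1=1}(u(y)-u(x))$. $\partial A=\{y\in\mathbb Z^d\setminus A:\ \|y-x\|_1=1\text{ for some }x\in A\}$. $|\cdot|$ is the Euclidean norm. *)

theory Defs
  imports Complex_Main
begin

text \<open>Points of Z^d are modelled as functions nat => int vanishing at indices >= d;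
  coordinate x_{i+1} of the paper is x i here (i < d).\<close>

definition lattice :: "nat \<Rightarrow> (nat \<Rightarrow> int) set" where
  "lattice d = {x. \<forall>i\<ge>d. x i = 0}"

definition l1dist :: "nat \<Rightarrow> (nat \<Rightarrow> int) \<Rightarrow> (nat \<Rightarrow> int) \<Rightarrow> int" where
  "l1dist d x y = (\<Sum>i<d. \<bar>x i - y i\<bar>)"

definition enorm :: "nat \<Rightarrow> (nat \<Rightarrow> int) \<Rightarrow> real" where
  "enorm d x = sqrt (\<Sum>i<d. (real_of_int (x i))\<^sup>2)"

definition lap :: "nat \<Rightarrow> ((nat \<Rightarrow> int) \<Rightarrow> real) \<Rightarrow> (nat \<Rightarrow> int) \<Rightarrow> real" where
  "lap d u x = (1 / (2 * real d)) *
     (\<Sum>y\<in>{y\<in>lattice d. l1dist d x y = 1}. (u y - u x))"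

definition boundary :: "nat \<Rightarrow> (nat \<Rightarrow> int) set \<Rightarrow> (nat \<Rightarrow> int) set" where
  "boundary d A = {y \<in> lattice d - A. \<exists>x\<in>A. l1dist d x y = 1}"

definition orthant :: "nat \<Rightarrow> nat \<Rightarrow> (nat \<Rightarrow> int) set" where
  "orthant d k = {x \<in> lattice d. \<forall>i<k. x i \<ge> 1}"

end

theory Submission
  imports Defs "HOL-Library.FuncSet"
begin

text \<open>
  The product \<open>h(x) = x\<^sub>1 \<cdots> x\<^sub>k\<close> is a positive discrete harmonic function on the
  orthant \<open>A\<close> vanishing on \<open>\<partial>A\<close>; its shifts have explicit first and second moments, which
  give closed-form Laplacians of functions of the form \<open>h \<cdot> \<phi>(|x|\<^sup>2)\<close>.

  Nonexistence: test the inequality against \<open>h \<theta>\<^sub>R\<^sup>m\<close> with \<open>\<theta>\<^sub>R = (1 - |x|\<^sup>2/R\<^sup>2)\<^sub>+\<close> and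
  sum by parts.  Young's inequality and a lattice point count bound the tested source
  \<open>\<Sum> |x|\<^sup>-\<^sup>\<alpha> u\<^sup>q h \<theta>\<^sub>R\<^sup>m\<close> by \<open>C R\<^sup>\<gamma>\<close> with \<open>\<gamma> = d + k + \<alpha>/(q-1) - 2q/(q-1)\<close>, and
  \<open>\<gamma> \<le> 0\<close> is exactly the failure of the exponent condition.  Then the total mass
  \<open>\<Sum> |x|\<^sup>-\<^sup>\<alpha> u\<^sup>q h\<close> is finite, and splitting the test region into an inner ball and an
  annulus shows that every annulus \<open>\<epsilon>R \<le> |x| < R\<close> with \<open>R\<close> large carries mass at least some
  \<open>\<tau> > 0\<close>; infinitely many disjoint annuli contradict finiteness.

  Existence: \<open>u = \<epsilon> h (c + |x|\<^sup>2)\<^sup>-\<^sup>\<beta>\<close>.  A second-order Taylor bound for \<open>s\<^sup>-\<^sup>\<beta>\<close> shows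
  \<open>-\<Delta>u \<ge> const \<cdot> \<epsilon> h (c + |x|\<^sup>2)\<^sup>-\<^sup>\<beta>\<^sup>-\<^sup>1\<close> as long as \<open>\<beta> < d/2 + k - 1\<close>, and this dominates
  \<open>|x|\<^sup>-\<^sup>\<alpha> u\<^sup>q\<close> for small \<open>\<epsilon>\<close> once \<open>\<beta>\<close> is also large enough; both requirements can be met
  exactly under the exponent condition.
\<close>

section \<open>Lattice neighbours and the Laplacian\<close>

definition shift :: "(nat \<Rightarrow> int) \<Rightarrow> nat \<Rightarrow> int \<Rightarrow> nat \<Rightarrow> int" where
  "shift x i c = x(i := x i + c)"

lemma shift_same [simp]: "shift x i c i = x i + c"
  by (simp add: shift_def)

lemma shift_other [simp]: "j \<noteq> i \<Longrightarrow> shift x i c j = x j"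
  by (simp add: shift_def)

lemma shift_shift_cancel [simp]: "shift (shift x i c) i (- c) = x" "shift (shift x i (- c)) i c = x"
  by (auto simp: shift_def)

lemma shift_in_lattice: "x \<in> lattice d \<Longrightarrow> i < d \<Longrightarrow> shift x i c \<in> lattice d"
  by (auto simp: lattice_def shift_def)

lemma sum_nonneg_int_eq_1_imp_single:
  fixes f :: "'a \<Rightarrow> int"
  assumes "finite S" "\<And>j. j \<in> S \<Longrightarrow> f j \<ge> 0" "sum f S = 1"
  obtains i where "i \<in> S" "f i = 1" "\<And>j. j \<in> S \<Longrightarrow> j \<noteq> i \<Longrightarrow> f j = 0"
proof -
  obtain i where i: "i \<in> S" "f i \<noteq> 0"
    using assms(3) sum.neutral[of S f] by (metis zero_neq_one)
  have split: "sum f S = f i + sum f (S - {i})"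
    using assms(1) i(1) by (simp add: sum.remove)
  have rest_nonneg: "sum f (S - {i}) \<ge> 0"
    using assms(2) by (intro sum_nonneg) auto
  have "f i = 1" "sum f (S - {i}) = 0"
    using split rest_nonneg assms(2,3) i by (smt (verit))+
  then show ?thesis
    using that i assms(1,2) sum_nonneg_eq_0_iff[of "S - {i}" f] by auto
qed

lemma neighbours_eq_shifts:
  assumes x: "x \<in> lattice d"
  shows "{y \<in> lattice d. l1dist d x y = 1} = (\<lambda>(i, c). shift x i c) ` ({..<d} \<times> {1, -1})"
proof (intro set_eqI iffI)
  fix y assume y: "y \<in> {y \<in> lattice d. l1dist d x y = 1}"
  then have dist: "(\<Sum>j<d. \<bar>x j - y j\<bar>) = 1"
    by (simp add: l1dist_def)
  obtain i where i: "i \<in> {..<d}" "\<bar>x i - y i\<bar> = 1"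
    and others: "\<And>j. j \<in> {..<d} \<Longrightarrow> j \<noteq> i \<Longrightarrow> \<bar>x j - y j\<bar> = 0"
    by (rule sum_nonneg_int_eq_1_imp_single[OF _ _ dist]) auto
  then have eq: "\<And>j. j < d \<Longrightarrow> j \<noteq> i \<Longrightarrow> x j = y j"
    by simp
  have "y = shift x i (y i - x i)"
  proof
    fix j
    show "y j = shift x i (y i - x i) j"
      using x y eq by (cases "j < d") (auto simp: shift_def lattice_def)
  qed
  moreover have "y i - x i \<in> {1, -1}"
    using i by auto
  ultimately show "y \<in> (\<lambda>(i, c). shift x i c) ` ({..<d} \<times> {1, -1})"
    using i by force
next
  fix y assume "y \<in> (\<lambda>(i, c). shift x i c) ` ({..<d} \<times> {1, -1})"
  then obtain i c where ic: "i < d" "c \<in> {1, -1}" "y = shift x i c"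
    by auto
  have "l1dist d x y = (\<Sum>j<d. if j = i then 1 else 0)"
    unfolding l1dist_def using ic by (intro sum.cong) auto
  then show "y \<in> {y \<in> lattice d. l1dist d x y = 1}"
    using x ic by (simp add: shift_in_lattice)
qed

lemma inj_on_shifts: "inj_on (\<lambda>(i, c). shift x i c) ({..<d} \<times> {1, -1})"
proof (rule inj_onI, clarify)
  fix i c i' c'
  assume eq: "shift x i c = shift x i' c'" and "c \<in> {1, -1::int}" "c' \<in> {1, -1::int}"
  show "i = i' \<and> c = c'"
  proof (cases "i = i'")
    case True
    then show ?thesis
      using fun_cong[OF eq, of i] by simp
  next
    case False
    then have "x i + c = x i"
      using fun_cong[OF eq, of i] by simp
    then show ?thesis
      using \<open>c \<in> {1, -1}\<close> by auto
  qed
qed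

lemma sum_neighbours:
  assumes "x \<in> lattice d"
  shows "(\<Sum>y\<in>{y \<in> lattice d. l1dist d x y = 1}. g y)
    = (\<Sum>i<d. g (shift x i 1) + g (shift x i (-1)))"
proof -
  have "(\<Sum>y\<in>{y \<in> lattice d. l1dist d x y = 1}. g y) = (\<Sum>(i, c)\<in>{..<d} \<times> {1, -1}. g (shift x i c))"
    unfolding neighbours_eq_shifts[OF assms]
    by (subst sum.reindex[OF inj_on_shifts]) (simp add: case_prod_unfold)
  also have "\<dots> = (\<Sum>i<d. \<Sum>c\<in>{1, -1}. g (shift x i c))"
    by (rule sum.cartesian_product[symmetric])
  finally show ?thesis
    by simp
qed

lemma lap_eq_sum_shifts:
  assumes "x \<in> lattice d"
  shows "lap d u x = (\<Sum>i<d. u (shift x i 1) + u (shift x i (-1)) - 2 * u x) / (2 * real d)"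
proof -
  have "(\<Sum>i<d. u (shift x i 1) - u x + (u (shift x i (-1)) - u x))
      = (\<Sum>i<d. u (shift x i 1) + u (shift x i (-1)) - 2 * u x)"
    by (intro sum.cong) auto
  then show ?thesis
    unfolding lap_def sum_neighbours[OF assms] by simp
qed

section \<open>Summation by parts\<close>

lemma sum_mult_shift_swap:
  fixes U P :: "(nat \<Rightarrow> int) \<Rightarrow> real"
  assumes B: "finite B" and supp: "{x. P x \<noteq> 0} \<subseteq> B"
    and closed: "\<And>z. P z \<noteq> 0 \<Longrightarrow> shift z i c \<in> B"
  shows "(\<Sum>x\<in>B. P x * U (shift x i c)) = (\<Sum>x\<in>B. U x * P (shift x i (- c)))"
proof -
  let ?Z = "{x. P x \<noteq> 0}"
  have "(\<Sum>x\<in>B. P x * U (shift x i c)) = (\<Sum>x\<in>?Z. P x * U (shift x i c))"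
    using B supp by (intro sum.mono_neutral_right) auto
  also have "\<dots> = (\<Sum>x\<in>(\<lambda>z. shift z i c) ` ?Z. U x * P (shift x i (- c)))"
    by (subst sum.reindex)
      (auto intro!: inj_onI sum.cong simp: mult.commute dest: arg_cong[of _ _ "\<lambda>z. shift z i (- c)"])
  also have "\<dots> = (\<Sum>x\<in>B. U x * P (shift x i (- c)))"
  proof (intro sum.mono_neutral_left B)
    show "(\<lambda>z. shift z i c) ` ?Z \<subseteq> B"
      using closed by auto
    show "\<forall>x\<in>B - (\<lambda>z. shift z i c) ` ?Z. U x * P (shift x i (- c)) = 0"
      by (metis (mono_tags, lifting) DiffD2 image_eqI mem_Collect_eq mult_eq_0_iff
          shift_shift_cancel(2))
  qed
  finally show ?thesis .
qed

lemma sum_mult_lap_symmetric: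
  fixes U P :: "(nat \<Rightarrow> int) \<Rightarrow> real"
  assumes B: "finite B" "B \<subseteq> lattice d" and supp: "{x. P x \<noteq> 0} \<subseteq> B"
    and closed: "\<And>z i c. P z \<noteq> 0 \<Longrightarrow> i < d \<Longrightarrow> c \<in> {1, -1} \<Longrightarrow> shift z i c \<in> B"
  shows "(\<Sum>x\<in>B. P x * lap d U x) = (\<Sum>x\<in>B. U x * lap d P x)"
proof -
  have lap_sum: "(\<Sum>x\<in>B. F x * lap d G x)
      = (\<Sum>i<d. (\<Sum>x\<in>B. F x * G (shift x i 1)) + (\<Sum>x\<in>B. F x * G (shift x i (-1)))
          - (\<Sum>x\<in>B. 2 * F x * G x)) / (2 * real d)" for F G :: "(nat \<Rightarrow> int) \<Rightarrow> real"
  proof -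
    have "(\<Sum>x\<in>B. F x * lap d G x)
        = (\<Sum>x\<in>B. \<Sum>i<d. F x * G (shift x i 1) + F x * G (shift x i (-1)) - 2 * F x * G x) / (2 * real d)"
      using B(2)
      by (simp add: lap_eq_sum_shifts subset_iff sum_distrib_left sum_divide_distrib algebra_simps)
    then show ?thesis
      by (subst (asm) sum.swap) (simp add: sum.distrib sum_subtractf)
  qed
  have "(\<Sum>x\<in>B. P x * U (shift x i c)) = (\<Sum>x\<in>B. U x * P (shift x i (- c)))"
    if "i < d" "c \<in> {1, -1}" for i c
    using sum_mult_shift_swap[OF B(1) supp] closed that by auto
  then show ?thesis
    unfolding lap_sum by (intro arg_cong[where f = "\<lambda>s. s / _"] sum.cong) (auto simp: mult_ac)
qed

section \<open>The harmonic function of the orthant\<close>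

definition coord_prod :: "nat \<Rightarrow> (nat \<Rightarrow> int) \<Rightarrow> real" where
  "coord_prod k x = (\<Prod>i<k. real_of_int (x i))"

definition sqnorm :: "nat \<Rightarrow> (nat \<Rightarrow> int) \<Rightarrow> real" where
  "sqnorm d x = (\<Sum>i<d. (real_of_int (x i))\<^sup>2)"

lemma sqnorm_nonneg: "sqnorm d x \<ge> 0"
  unfolding sqnorm_def by (intro sum_nonneg) auto

lemma coord_sq_le_sqnorm: "i < d \<Longrightarrow> (real_of_int (x i))\<^sup>2 \<le> sqnorm d x"
  unfolding sqnorm_def by (rule member_le_sum) auto

lemma enorm_eq_sqrt_sqnorm: "enorm d x = sqrt (sqnorm d x)"
  by (simp add: enorm_def sqnorm_def)

lemma enorm_nonneg: "0 \<le> enorm d x"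
  by (simp add: enorm_eq_sqrt_sqnorm sqnorm_nonneg)

lemma enorm_sq: "(enorm d x)\<^sup>2 = sqnorm d x"
  by (simp add: enorm_eq_sqrt_sqnorm sqnorm_nonneg)

lemma sqnorm_shift: "i < d \<Longrightarrow> sqnorm d (shift x i c) = sqnorm d x + 2 * c * x i + c\<^sup>2"
proof -
  assume i: "i < d"
  have other: "(\<Sum>j\<in>{..<d} - {i}. (real_of_int (shift x i c j))\<^sup>2)
      = (\<Sum>j\<in>{..<d} - {i}. (real_of_int (x j))\<^sup>2)"
    by (intro sum.cong) auto
  show ?thesis
    using i other by (simp add: sqnorm_def sum.remove power2_eq_square algebra_simps)
qed

lemma coord_prod_shift:
  assumes "i < k"
  shows "coord_prod k (shift x i c) = (x i + c) * (\<Prod>j\<in>{..<k} - {i}. real_of_int (x j))"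
proof -
  have "(\<Prod>j\<in>{..<k} - {i}. real_of_int (shift x i c j)) = (\<Prod>j\<in>{..<k} - {i}. real_of_int (x j))"
    by (intro prod.cong) auto
  then show ?thesis
    using assms by (simp add: coord_prod_def prod.remove)
qed

lemma coord_prod_shift_beyond: "k \<le> i \<Longrightarrow> coord_prod k (shift x i c) = coord_prod k x"
  unfolding coord_prod_def by (intro prod.cong) auto

text \<open>The weights \<open>2 x\<^sub>i \<plusminus> 1\<close> are the increments of \<open>sqnorm\<close> along the two shifts in direction \<open>i\<close>.\<close>

lemma coord_prod_shift_moments:
  fixes x :: "nat \<Rightarrow> int" and i k :: nat
  defines "p \<equiv> coord_prod k (shift x i 1)" and "m \<equiv> coord_prod k (shift x i (-1))"
    and "a \<equiv> real_of_int (x i)"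
  shows "p + m = 2 * coord_prod k x"
    and "p * (2 * a + 1) + m * (1 - 2 * a) = (if i < k then 6 else 2) * coord_prod k x"
    and "p * (2 * a + 1)\<^sup>2 + m * (1 - 2 * a)\<^sup>2 = coord_prod k x * (8 * a\<^sup>2 + (if i < k then 10 else 2))"
proof -
  have "p + m = 2 * coord_prod k x
    \<and> p * (2 * a + 1) + m * (1 - 2 * a) = (if i < k then 6 else 2) * coord_prod k x
    \<and> p * (2 * a + 1)\<^sup>2 + m * (1 - 2 * a)\<^sup>2 = coord_prod k x * (8 * a\<^sup>2 + (if i < k then 10 else 2))"
  proof (cases "i < k")
    case True
    define r where "r = (\<Prod>j\<in>{..<k} - {i}. real_of_int (x j))"
    have h: "coord_prod k x = a * r"
      using True by (simp add: coord_prod_def a_def r_def prod.remove)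
    have hp: "p = (a + 1) * r" and hm: "m = (a - 1) * r"
      using coord_prod_shift[OF True, of x] by (simp_all add: p_def m_def a_def r_def)
    show ?thesis
      unfolding h hp hm using True by (simp add: power2_eq_square algebra_simps)
  next
    case False
    then have "p = coord_prod k x" "m = coord_prod k x"
      by (simp_all add: p_def m_def coord_prod_shift_beyond)
    then show ?thesis
      using False by (simp add: power2_eq_square algebra_simps)
  qed
  then show "p + m = 2 * coord_prod k x"
    and "p * (2 * a + 1) + m * (1 - 2 * a) = (if i < k then 6 else 2) * coord_prod k x"
    and "p * (2 * a + 1)\<^sup>2 + m * (1 - 2 * a)\<^sup>2 = coord_prod k x * (8 * a\<^sup>2 + (if i < k then 10 else 2))"
    by auto
qed

lemma sum_lessThan_if_less:
  fixes a b :: real and k d :: nat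
  assumes "k \<le> d"
  shows "(\<Sum>i<d. if i < k then a else b) = k * a + (d - k) * b"
proof -
  have "(\<Sum>i<d. if i < k then a else b)
      = (\<Sum>i<k. if i < k then a else b) + (\<Sum>i\<in>{k..<d}. if i < k then a else b)"
    by (metis assms le0 lessThan_atLeast0 sum.atLeastLessThan_concat)
  also have "\<dots> = (\<Sum>i<k. a) + (\<Sum>i\<in>{k..<d}. b)"
    by (intro arg_cong2[where f = "(+)"] sum.cong) auto
  finally show ?thesis
    using assms by (simp add: of_nat_diff)
qed

lemma sum_coord_prod_shifts:
  "(\<Sum>i<d. coord_prod k (shift x i 1) + coord_prod k (shift x i (-1))) = 2 * real d * coord_prod k x"
  by (simp add: coord_prod_shift_moments(1))

lemma sum_coord_prod_shifts_linear:
  assumes "k \<le> d"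
  shows "(\<Sum>i<d. coord_prod k (shift x i 1) * (2 * real_of_int (x i) + 1)
                + coord_prod k (shift x i (-1)) * (1 - 2 * real_of_int (x i)))
    = (2 * real d + 4 * real k) * coord_prod k x"
proof -
  have "(\<Sum>i<d. coord_prod k (shift x i 1) * (2 * real_of_int (x i) + 1)
                + coord_prod k (shift x i (-1)) * (1 - 2 * real_of_int (x i)))
      = (\<Sum>i<d. if i < k then 6 else 2) * coord_prod k x"
    by (simp add: coord_prod_shift_moments(2) sum_distrib_right)
  then show ?thesis
    using sum_lessThan_if_less[OF assms, of 6 2] assms by (simp add: of_nat_diff algebra_simps)
qed

lemma sum_coord_prod_shifts_quadratic:
  assumes "k \<le> d"
  shows "(\<Sum>i<d. coord_prod k (shift x i 1) * (2 * real_of_int (x i) + 1)\<^sup>2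
                + coord_prod k (shift x i (-1)) * (1 - 2 * real_of_int (x i))\<^sup>2)
    = coord_prod k x * (8 * sqnorm d x + 2 * real d + 8 * real k)"
proof -
  have "(\<Sum>i<d. coord_prod k (shift x i 1) * (2 * real_of_int (x i) + 1)\<^sup>2
                + coord_prod k (shift x i (-1)) * (1 - 2 * real_of_int (x i))\<^sup>2)
      = coord_prod k x * (\<Sum>i<d. 8 * (real_of_int (x i))\<^sup>2 + (if i < k then 10 else 2))"
    by (simp add: coord_prod_shift_moments(3) sum_distrib_left)
  also have "\<dots> = coord_prod k x * (8 * sqnorm d x + (\<Sum>i<d. if i < k then 10 else 2))"
    by (simp add: sqnorm_def sum.distrib sum_distrib_left)
  also have "\<dots> = coord_prod k x * (8 * sqnorm d x + 2 * real d + 8 * real k)"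
    using sum_lessThan_if_less[OF assms, of 10 2] assms by (simp add: of_nat_diff algebra_simps)
  finally show ?thesis .
qed

lemma coord_prod_pos: "x \<in> orthant d k \<Longrightarrow> coord_prod k x > 0"
  unfolding coord_prod_def orthant_def by (auto intro!: prod_pos)

lemma shift_leaving_orthant:
  assumes x: "x \<in> orthant d k" and i: "i < d" and c: "c \<in> {1, -1}"
    and out: "shift x i c \<notin> orthant d k"
  shows "coord_prod k (shift x i c) = 0" and "shift x i c \<in> boundary d (orthant d k)"
proof -
  have x_lattice: "x \<in> lattice d"
    using x by (simp add: orthant_def)
  then obtain j where j: "j < k" "shift x i c j < 1"
    using out shift_in_lattice[OF _ i] by (auto simp: orthant_def not_le)
  then have "j = i"
    using x by (cases "j = i") (auto simp: orthant_def)
  then have "x i + c = 0"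
    using x j c by (auto simp: orthant_def)
  then show "coord_prod k (shift x i c) = 0"
    using coord_prod_shift[of i k x c] j \<open>j = i\<close> by simp
  have "shift x i c \<in> {y \<in> lattice d. l1dist d x y = 1}"
    unfolding neighbours_eq_shifts[OF x_lattice] using i c by force
  then show "shift x i c \<in> boundary d (orthant d k)"
    unfolding boundary_def using out x by auto
qed

lemma coord_prod_shift_nonneg:
  assumes "x \<in> orthant d k" "i < d" "c \<in> {1, -1}"
  shows "coord_prod k (shift x i c) \<ge> 0"
proof (cases "shift x i c \<in> orthant d k")
  case True
  then show ?thesis
    using coord_prod_pos less_imp_le by blast
next
  case False
  then show ?thesis
    using shift_leaving_orthant(1)[OF assms] by simp
qed

lemma coord_prod_boundary:
  assumes "y \<in> boundary d (orthant d k)"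
  shows "coord_prod k y = 0"
proof -
  obtain x where x: "x \<in> orthant d k" and y: "y \<in> lattice d" "y \<notin> orthant d k" "l1dist d x y = 1"
    using assms by (auto simp: boundary_def)
  have x_lattice: "x \<in> lattice d"
    using x by (simp add: orthant_def)
  have "y \<in> {y \<in> lattice d. l1dist d x y = 1}"
    using y by simp
  then have "y \<in> (\<lambda>(i, c). shift x i c) ` ({..<d} \<times> {1, -1})"
    unfolding neighbours_eq_shifts[OF x_lattice] .
  then obtain i c where "i < d" "c \<in> {1, -1}" "y = shift x i c"
    by auto
  then show ?thesis
    using shift_leaving_orthant(1)[OF x] y(2) by blast
qed

lemma lap_zero_extension:
  assumes "x \<in> A" and "\<forall>y\<in>boundary d A. u y = 0"
  shows "lap d (\<lambda>y. if y \<in> A then u y else 0) x = lap d u x"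
proof -
  have "(if y \<in> A then u y else 0) = u y" if "y \<in> lattice d" "l1dist d x y = 1" for y
    using assms that by (auto simp: boundary_def)
  then show ?thesis
    unfolding lap_def by (intro arg_cong[where f = "(*) _"] sum.cong) (auto simp: assms(1))
qed

lemma one_le_enorm:
  assumes "x \<in> orthant d k" "1 \<le> k" "k \<le> d"
  shows "1 \<le> enorm d x"
proof -
  have "1 \<le> (real_of_int (x 0))\<^sup>2"
    using assms by (auto simp: orthant_def)
  also have "\<dots> \<le> sqnorm d x"
    using assms by (intro coord_sq_le_sqnorm) auto
  finally show ?thesis
    by (simp add: enorm_eq_sqrt_sqnorm)
qed

lemma coord_prod_le_enorm_power:
  assumes x: "x \<in> orthant d k" and "k \<le> d"
  shows "coord_prod k x \<le> enorm d x ^ k"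
proof -
  have "coord_prod k x \<le> (\<Prod>i<k. enorm d x)"
    unfolding coord_prod_def
  proof (rule prod_mono)
    fix i assume i: "i \<in> {..<k}"
    have "(real_of_int (x i))\<^sup>2 \<le> sqnorm d x"
      using i assms by (intro coord_sq_le_sqnorm) auto
    then show "0 \<le> real_of_int (x i) \<and> real_of_int (x i) \<le> enorm d x"
      using x i by (auto simp: orthant_def enorm_eq_sqrt_sqnorm intro: real_le_rsqrt)
  qed
  then show ?thesis
    by simp
qed

section \<open>Test functions and the weak inequality\<close>

lemma power_ge_tangent:
  fixes a t :: real
  assumes "0 \<le> a" "0 \<le> t"
  shows "a ^ m + m * a ^ (m - 1) * (t - a) \<le> t ^ m"
proof (cases "m = 0")
  case False
  have powers: "(\<Sum>i<m. a ^ (m - Suc i) * a ^ i) = m * a ^ (m - 1)"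
    by (simp flip: power_add)
  have "(\<Sum>i<m. a ^ (m - Suc i) * ((t - a) * (t ^ i - a ^ i)))
      = (t - a) * (\<Sum>i<m. a ^ (m - Suc i) * t ^ i) - (t - a) * (\<Sum>i<m. a ^ (m - Suc i) * a ^ i)"
    by (simp only: sum_distrib_left flip: sum_subtractf) (simp add: algebra_simps)
  also have "\<dots> = t ^ m - a ^ m - m * a ^ (m - 1) * (t - a)"
    unfolding powers power_diff_sumr2[of t m a] by (simp add: mult_ac)
  finally have tangent_gap: "t ^ m - a ^ m - m * a ^ (m - 1) * (t - a)
      = (\<Sum>i<m. a ^ (m - Suc i) * ((t - a) * (t ^ i - a ^ i)))" ..
  have "(t - a) * (t ^ i - a ^ i) \<ge> 0" for i
  proof (cases "a \<le> t")
    case True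
    then show ?thesis
      using assms power_mono[of a t i] by simp
  next
    case False
    then show ?thesis
      using assms power_mono[of t a i] by (simp add: mult_nonpos_nonpos)
  qed
  then have "(\<Sum>i<m. a ^ (m - Suc i) * ((t - a) * (t ^ i - a ^ i))) \<ge> 0"
    using assms by (intro sum_nonneg) auto
  then show ?thesis
    using tangent_gap by simp
qed simp

definition cutoff :: "nat \<Rightarrow> real \<Rightarrow> (nat \<Rightarrow> int) \<Rightarrow> real" where
  "cutoff d R x = max 0 (1 - sqnorm d x / R\<^sup>2)"

definition test_fun :: "nat \<Rightarrow> nat \<Rightarrow> real \<Rightarrow> nat \<Rightarrow> (nat \<Rightarrow> int) \<Rightarrow> real" where
  "test_fun d k R m x = (if x \<in> orthant d k then coord_prod k x * cutoff d R x ^ m else 0)"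

lemma cutoff_nonneg: "cutoff d R x \<ge> 0"
  by (simp add: cutoff_def)

lemma cutoff_le_1: "cutoff d R x \<le> 1"
  using sqnorm_nonneg[of d x] by (simp add: cutoff_def)

lemma cutoff_eq_0: "R > 0 \<Longrightarrow> R\<^sup>2 \<le> sqnorm d x \<Longrightarrow> cutoff d R x = 0"
  by (simp add: cutoff_def field_simps)

lemma test_fun_nonneg: "0 \<le> test_fun d k R m x"
  using coord_prod_pos[of x d k] cutoff_nonneg[of d R x] by (simp add: test_fun_def less_imp_le)

lemma test_fun_shift:
  assumes "x \<in> orthant d k" "i < d" "c \<in> {1, -1}"
  shows "test_fun d k R m (shift x i c) = coord_prod k (shift x i c) * cutoff d R (shift x i c) ^ m"
  using shift_leaving_orthant(1)[OF assms] by (auto simp: test_fun_def)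

lemma sum_shifts_coord_prod_cutoff_ge:
  assumes x: "x \<in> orthant d k" and "k \<le> d" "R > 0"
  shows "2 * real d * coord_prod k x * cutoff d R x - (2 * real d + 4 * real k) * coord_prod k x / R\<^sup>2
    \<le> (\<Sum>i<d. coord_prod k (shift x i 1) * cutoff d R (shift x i 1)
             + coord_prod k (shift x i (-1)) * cutoff d R (shift x i (-1)))"
    (is "_ \<le> ?S")
proof (cases "sqnorm d x \<le> R\<^sup>2")
  case True
  define F where "F y = 1 - sqnorm d y / R\<^sup>2" for y
  have "cutoff d R x = F x"
    using True \<open>R > 0\<close> by (simp add: cutoff_def F_def)
  have shifted: "F (shift x i 1) = F x - (2 * real_of_int (x i) + 1) / R\<^sup>2"
    "F (shift x i (-1)) = F x - (1 - 2 * real_of_int (x i)) / R\<^sup>2" if "i < d" for i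
    using that by (simp_all add: F_def sqnorm_shift diff_divide_distrib add_divide_distrib)
  have "2 * real d * coord_prod k x * cutoff d R x - (2 * real d + 4 * real k) * coord_prod k x / R\<^sup>2
      = F x * (\<Sum>i<d. coord_prod k (shift x i 1) + coord_prod k (shift x i (-1)))
        - (\<Sum>i<d. coord_prod k (shift x i 1) * (2 * real_of_int (x i) + 1)
             + coord_prod k (shift x i (-1)) * (1 - 2 * real_of_int (x i))) / R\<^sup>2"
    unfolding sum_coord_prod_shifts sum_coord_prod_shifts_linear[OF \<open>k \<le> d\<close>] \<open>cutoff d R x = F x\<close>
    by simp
  also have "\<dots> = (\<Sum>i<d. coord_prod k (shift x i 1) * F (shift x i 1)
                       + coord_prod k (shift x i (-1)) * F (shift x i (-1)))"
    by (simp add: shifted sum_subtractf sum_distrib_left sum_divide_distrib sum.distrib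
        algebra_simps diff_divide_distrib add_divide_distrib)
  also have "\<dots> \<le> ?S"
    using coord_prod_shift_nonneg[OF x]
    by (intro sum_mono add_mono mult_left_mono) (auto simp: cutoff_def F_def)
  finally show ?thesis .
next
  case False
  then have "cutoff d R x = 0"
    using \<open>R > 0\<close> by (simp add: cutoff_eq_0)
  moreover have "0 \<le> ?S"
    using coord_prod_shift_nonneg[OF x] cutoff_nonneg
    by (intro sum_nonneg add_nonneg_nonneg mult_nonneg_nonneg) auto
  moreover have "0 \<le> (2 * real d + 4 * real k) * coord_prod k x / R\<^sup>2"
    using coord_prod_pos[OF x] by simp
  ultimately show ?thesis
    by simp
qed

lemma lap_test_fun_eq:
  assumes x: "x \<in> orthant d k"
  shows "lap d (test_fun d k R m) x
    = ((\<Sum>i<d. coord_prod k (shift x i 1) * cutoff d R (shift x i 1) ^ m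
              + coord_prod k (shift x i (-1)) * cutoff d R (shift x i (-1)) ^ m)
        - 2 * real d * coord_prod k x * cutoff d R x ^ m) / (2 * real d)"
proof -
  have "x \<in> lattice d"
    using x by (simp add: orthant_def)
  moreover have "(\<Sum>i<d. test_fun d k R m (shift x i 1) + test_fun d k R m (shift x i (-1)))
      = (\<Sum>i<d. coord_prod k (shift x i 1) * cutoff d R (shift x i 1) ^ m
              + coord_prod k (shift x i (-1)) * cutoff d R (shift x i (-1)) ^ m)"
    by (intro sum.cong) (simp_all add: test_fun_shift[OF x])
  ultimately show ?thesis
    using x by (simp add: lap_eq_sum_shifts sum_subtractf test_fun_def mult.assoc)
qed

text \<open>The tangent-line bound for \<open>t \<mapsto> t\<^sup>m\<close> reduces the estimate to the case \<open>m = 1\<close>.\<close>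

lemma neg_lap_test_fun_le:
  assumes x: "x \<in> orthant d k" and "k \<le> d" "R > 0"
  shows "- lap d (test_fun d k R m) x
    \<le> m * (2 * real d + 4 * real k) / (2 * real d * R\<^sup>2) * coord_prod k x * cutoff d R x ^ (m - 1)"
proof -
  define a where "a = cutoff d R x"
  define h where "h = coord_prod k x"
  let ?hp = "\<lambda>i. coord_prod k (shift x i 1)" and ?hm = "\<lambda>i. coord_prod k (shift x i (-1))"
  let ?tp = "\<lambda>i. cutoff d R (shift x i 1)" and ?tm = "\<lambda>i. cutoff d R (shift x i (-1))"
  let ?M = "m * a ^ (m - 1)"
  have "0 \<le> a"
    by (simp add: a_def cutoff_nonneg)
  have "(\<Sum>i<d. ?hp i * (a ^ m + ?M * (?tp i - a)) + ?hm i * (a ^ m + ?M * (?tm i - a)))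
      \<le> (\<Sum>i<d. ?hp i * ?tp i ^ m + ?hm i * ?tm i ^ m)"
    using coord_prod_shift_nonneg[OF x] \<open>0 \<le> a\<close> cutoff_nonneg
    by (intro sum_mono add_mono mult_left_mono power_ge_tangent) auto
  moreover have "(\<Sum>i<d. ?hp i * (a ^ m + ?M * (?tp i - a)) + ?hm i * (a ^ m + ?M * (?tm i - a)))
      = a ^ m * (\<Sum>i<d. ?hp i + ?hm i)
        + ?M * ((\<Sum>i<d. ?hp i * ?tp i + ?hm i * ?tm i) - a * (\<Sum>i<d. ?hp i + ?hm i))"
    by (simp add: sum.distrib sum_subtractf sum_distrib_left algebra_simps)
  moreover have "(\<Sum>i<d. ?hp i + ?hm i) = 2 * real d * h"
    by (simp add: sum_coord_prod_shifts h_def)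
  moreover have "- ((2 * real d + 4 * real k) * h / R\<^sup>2)
      \<le> (\<Sum>i<d. ?hp i * ?tp i + ?hm i * ?tm i) - 2 * real d * h * a"
    using sum_shifts_coord_prod_cutoff_ge[OF assms] by (simp add: a_def h_def)
  ultimately have "- (?M * ((2 * real d + 4 * real k) * h / R\<^sup>2))
      \<le> (\<Sum>i<d. ?hp i * ?tp i ^ m + ?hm i * ?tm i ^ m) - 2 * real d * h * a ^ m"
    using mult_left_mono[of _ _ ?M] \<open>0 \<le> a\<close> by (fastforce simp: algebra_simps)
  then have "- lap d (test_fun d k R m) x \<le> ?M * ((2 * real d + 4 * real k) * h / R\<^sup>2) / (2 * real d)"
    unfolding lap_test_fun_eq[OF x] minus_divide_left a_def[symmetric] h_def[symmetric]
    by (intro divide_right_mono) simp_all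
  also have "\<dots> = m * (2 * real d + 4 * real k) / (2 * real d * R\<^sup>2) * h * a ^ (m - 1)"
    by (simp add: field_simps)
  finally show ?thesis
    by (simp add: a_def h_def)
qed

definition box :: "nat \<Rightarrow> int \<Rightarrow> (nat \<Rightarrow> int) set" where
  "box d M = {x \<in> lattice d. \<forall>i<d. \<bar>x i\<bar> \<le> M}"

definition orthant_ball :: "nat \<Rightarrow> nat \<Rightarrow> real \<Rightarrow> (nat \<Rightarrow> int) set" where
  "orthant_ball d k R = {x \<in> orthant d k. sqnorm d x < R\<^sup>2}"

lemma finite_box_card_le: "finite (box d M) \<and> card (box d M) \<le> nat (2 * M + 1) ^ d"
proof -
  let ?restr = "\<lambda>x::nat \<Rightarrow> int. restrict x {..<d}"
  have inj: "inj_on ?restr (box d M)"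
  proof (rule inj_onI)
    fix x y assume xy: "x \<in> box d M" "y \<in> box d M" "?restr x = ?restr y"
    show "x = y"
    proof
      fix i
      show "x i = y i"
      proof (cases "i < d")
        case True
        then show ?thesis
          using xy(3) by (metis lessThan_iff restrict_apply')
      next
        case False
        then show ?thesis
          using xy(1,2) by (simp add: box_def lattice_def)
      qed
    qed
  qed
  have sub: "?restr ` box d M \<subseteq> PiE {..<d} (\<lambda>_. {-M..M})"
    by (auto simp: box_def abs_le_iff split: if_splits)
  have fin: "finite (PiE {..<d} (\<lambda>_. {-M..M}))"
    by (intro finite_PiE) auto
  have "finite (box d M)"
    using finite_imageD[OF finite_subset[OF sub fin] inj] .
  moreover have "card (box d M) \<le> card (PiE {..<d} (\<lambda>_. {-M..M}))"
    by (rule card_inj_on_le[OF inj sub fin])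
  ultimately show ?thesis
    by (simp add: card_PiE)
qed

lemma box_mono: "M \<le> M' \<Longrightarrow> box d M \<subseteq> box d M'"
  by (auto simp: box_def)

lemma orthant_ball_subset_box:
  assumes "R > 0"
  shows "orthant_ball d k R \<subseteq> box d \<lceil>R\<rceil>"
proof
  fix x assume x: "x \<in> orthant_ball d k R"
  have "\<bar>x i\<bar> \<le> \<lceil>R\<rceil>" if "i < d" for i
  proof -
    have "\<bar>real_of_int (x i)\<bar>\<^sup>2 < R\<^sup>2"
      using coord_sq_le_sqnorm[OF that, of x] x by (simp add: orthant_ball_def)
    then have "\<bar>real_of_int (x i)\<bar> < R"
      using assms power2_less_imp_less by fastforce
    then show ?thesis
      by linarith
  qed
  then show "x \<in> box d \<lceil>R\<rceil>"
    using x by (auto simp: box_def orthant_ball_def orthant_def)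
qed

lemma finite_orthant_ball: "R > 0 \<Longrightarrow> finite (orthant_ball d k R)"
  using finite_subset[OF orthant_ball_subset_box] finite_box_card_le by blast

lemma orthant_ball_mono: "0 \<le> R \<Longrightarrow> R \<le> R' \<Longrightarrow> orthant_ball d k R \<subseteq> orthant_ball d k R'"
  unfolding orthant_ball_def using power_mono[of R R' 2] by (auto intro: less_le_trans)

lemma enorm_less_radius: "x \<in> orthant_ball d k R \<Longrightarrow> R > 0 \<Longrightarrow> enorm d x < R"
  by (simp add: orthant_ball_def enorm_eq_sqrt_sqnorm real_less_lsqrt sqnorm_nonneg)

lemma card_orthant_ball_le:
  assumes "R \<ge> 1"
  shows "real (card (orthant_ball d k R)) \<le> (5 * R) ^ d"
proof -
  have "card (orthant_ball d k R) \<le> card (box d \<lceil>R\<rceil>)"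
    using assms finite_box_card_le orthant_ball_subset_box by (intro card_mono) auto
  also have "\<dots> \<le> nat (2 * \<lceil>R\<rceil> + 1) ^ d"
    using finite_box_card_le by blast
  finally have "real (card (orthant_ball d k R)) \<le> real (nat (2 * \<lceil>R\<rceil> + 1)) ^ d"
    by (metis of_nat_le_iff of_nat_power)
  also have "\<dots> = (real_of_int (2 * \<lceil>R\<rceil> + 1)) ^ d"
    using assms by (simp add: of_nat_nat)
  also have "\<dots> \<le> (5 * R) ^ d"
    using assms by (intro power_mono) linarith+
  finally show ?thesis .
qed

lemma test_fun_nonzero_imp_in_ball:
  assumes "test_fun d k R m x \<noteq> 0" "R > 0" "m \<ge> 1"
  shows "x \<in> orthant_ball d k R"
proof -
  have "x \<in> orthant d k"
    using assms(1) by (auto simp: test_fun_def split: if_splits)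
  moreover have "sqnorm d x < R\<^sup>2"
  proof (rule ccontr)
    assume "\<not> sqnorm d x < R\<^sup>2"
    then have "cutoff d R x = 0"
      using cutoff_eq_0 assms(2) by simp
    moreover have "coord_prod k x * cutoff d R x ^ m \<noteq> 0"
      using assms(1) by (simp add: test_fun_def split: if_splits)
    ultimately show False
      using assms(3) by simp
  qed
  ultimately show ?thesis
    by (simp add: orthant_ball_def)
qed

lemma sum_test_fun_lap_symmetric:
  assumes "R > 0" "m \<ge> 1"
  shows "(\<Sum>x\<in>box d (\<lceil>R\<rceil> + 1). test_fun d k R m x * lap d U x)
    = (\<Sum>x\<in>box d (\<lceil>R\<rceil> + 1). U x * lap d (test_fun d k R m) x)"
proof -
  let ?B = "box d (\<lceil>R\<rceil> + 1)"
  have supp_box: "z \<in> box d \<lceil>R\<rceil>" if "test_fun d k R m z \<noteq> 0" for z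
    using test_fun_nonzero_imp_in_ball[OF that assms] orthant_ball_subset_box[OF \<open>R > 0\<close>] by blast
  have "finite ?B" "?B \<subseteq> lattice d"
    using finite_box_card_le by (auto simp: box_def)
  moreover have "{x. test_fun d k R m x \<noteq> 0} \<subseteq> ?B"
    using supp_box box_mono[of "\<lceil>R\<rceil>" "\<lceil>R\<rceil> + 1" d] by auto
  moreover have "shift z i c \<in> ?B" if "test_fun d k R m z \<noteq> 0" "i < d" "c \<in> {1, -1}" for z i c
  proof -
    have z: "z \<in> box d \<lceil>R\<rceil>"
      using supp_box[OF that(1)] .
    then have "\<bar>shift z i c j\<bar> \<le> \<lceil>R\<rceil> + 1" if "j < d" for j
      using that \<open>c \<in> {1, -1}\<close> by (cases "j = i") (auto simp: box_def)
    then show ?thesis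
      using z shift_in_lattice[OF _ \<open>i < d\<close>] by (simp add: box_def)
  qed
  ultimately show ?thesis
    by (rule sum_mult_lap_symmetric)
qed

lemma zero_extension_neg_lap_test_fun_le:
  assumes "k \<le> d" "R > 0" "\<forall>x\<in>orthant d k. u x \<ge> 0"
  shows "(if x \<in> orthant d k then u x else 0) * - lap d (test_fun d k R m) x
    \<le> m * (2 * real d + 4 * real k) / (2 * real d * R\<^sup>2) * (u x * test_fun d k R (m - 1) x)"
proof (cases "x \<in> orthant d k")
  case True
  then show ?thesis
    using mult_left_mono[OF neg_lap_test_fun_le[OF True assms(1,2)], of "u x"] assms(3)
    by (simp add: test_fun_def mult_ac)
qed (simp add: test_fun_def)

lemma weak_form_inequality:
  fixes u f :: "(nat \<Rightarrow> int) \<Rightarrow> real"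
  assumes "k \<le> d" and "R > 0" and "m \<ge> 2"
    and u_nonneg: "\<forall>x\<in>orthant d k. u x \<ge> 0"
    and super: "\<forall>x\<in>orthant d k. f x \<le> - lap d u x"
    and bd: "\<forall>y\<in>boundary d (orthant d k). u y = 0"
  shows "(\<Sum>x\<in>orthant_ball d k R. f x * coord_prod k x * cutoff d R x ^ m)
    \<le> m * (2 * real d + 4 * real k) / (2 * real d * R\<^sup>2)
        * (\<Sum>x\<in>orthant_ball d k R. u x * coord_prod k x * cutoff d R x ^ (m - 1))"
proof -
  let ?A = "orthant d k" and ?ball = "orthant_ball d k R" and ?B = "box d (\<lceil>R\<rceil> + 1)"
  define U where "U = (\<lambda>y. if y \<in> ?A then u y else 0)"
  define K where "K = m * (2 * real d + 4 * real k) / (2 * real d * R\<^sup>2)"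
  have ball_B: "?ball \<subseteq> ?B"
    using orthant_ball_subset_box[OF \<open>R > 0\<close>] box_mono[of "\<lceil>R\<rceil>" "\<lceil>R\<rceil> + 1" d] by auto
  have fin_B: "finite ?B"
    using finite_box_card_le by blast
  have on_ball: "(\<Sum>x\<in>?ball. g x * test_fun d k R n x) = (\<Sum>x\<in>?B. g x * test_fun d k R n x)"
    if "1 \<le> n" for g n
    using test_fun_nonzero_imp_in_ball[OF _ \<open>R > 0\<close> that]
    by (intro sum.mono_neutral_left fin_B ball_B) auto
  have "(\<Sum>x\<in>?ball. f x * coord_prod k x * cutoff d R x ^ m) = (\<Sum>x\<in>?B. f x * test_fun d k R m x)"
    using on_ball[of m f] \<open>m \<ge> 2\<close> by (simp add: test_fun_def orthant_ball_def mult_ac)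
  also have "\<dots> \<le> (\<Sum>x\<in>?B. test_fun d k R m x * - lap d U x)"
  proof (rule sum_mono)
    fix x
    have "0 \<le> test_fun d k R m x"
      by (rule test_fun_nonneg)
    then show "f x * test_fun d k R m x \<le> test_fun d k R m x * - lap d U x"
    proof (cases "x \<in> ?A")
      case True
      then have "f x \<le> - lap d U x"
        using super lap_zero_extension[OF True bd] by (simp add: U_def)
      then show ?thesis
        using \<open>0 \<le> test_fun d k R m x\<close> by (metis mult.commute mult_right_mono)
    qed (simp add: test_fun_def)
  qed
  also have "\<dots> = (\<Sum>x\<in>?B. U x * - lap d (test_fun d k R m) x)"
    using sum_test_fun_lap_symmetric[OF \<open>R > 0\<close>, of m d k U] \<open>m \<ge> 2\<close> by (simp add: sum_negf)
  also have "\<dots> \<le> (\<Sum>x\<in>?B. K * (u x * test_fun d k R (m - 1) x))"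
    unfolding U_def K_def using zero_extension_neg_lap_test_fun_le[OF \<open>k \<le> d\<close> \<open>R > 0\<close> u_nonneg]
    by (rule sum_mono)
  also have "\<dots> = K * (\<Sum>x\<in>?ball. u x * test_fun d k R (m - 1) x)"
    using on_ball[of "m - 1" u] \<open>m \<ge> 2\<close> by (simp add: sum_distrib_left)
  also have "(\<Sum>x\<in>?ball. u x * test_fun d k R (m - 1) x)
      = (\<Sum>x\<in>?ball. u x * coord_prod k x * cutoff d R x ^ (m - 1))"
    by (intro sum.cong) (auto simp: test_fun_def orthant_ball_def)
  finally show ?thesis
    by (simp add: K_def)
qed

section \<open>Young's inequality and lattice point counts\<close>

lemma mult_le_powr_above_threshold:
  fixes u a b q :: real
  assumes "0 < a" "0 < b" "1 < q" "(b / a) powr (1 / (q - 1)) < u"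
  shows "u * b \<le> a * u powr q"
proof -
  have "0 < u"
    using assms(4) powr_ge_zero[of "b / a" "1 / (q - 1)"] by linarith
  have "b / a = ((b / a) powr (1 / (q - 1))) powr (q - 1)"
    using assms by (simp add: powr_powr)
  also have "\<dots> < u powr (q - 1)"
    using assms by (intro powr_less_mono2) auto
  finally have "b * u \<le> a * u powr (q - 1) * u"
    using assms(1) \<open>0 < u\<close> by (intro mult_right_mono) (auto simp: field_simps)
  also have "\<dots> = a * u powr q"
    using \<open>0 < u\<close> powr_add[of u "q - 1" 1] by simp
  finally show ?thesis
    by (simp add: mult.commute)
qed

text \<open>Split at \<open>\<tau> = (b / a) powr (1 / (q - 1))\<close>: above it the first term dominates, and the
  second term equals \<open>\<tau> b\<close>.\<close>

lemma young_powr_le: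
  fixes u a b q :: real
  assumes u: "0 \<le> u" and a: "0 < a" and b: "0 \<le> b" and q: "1 < q"
  shows "u * b \<le> a * u powr q + a powr (- 1 / (q - 1)) * b powr (q / (q - 1))"
proof (cases "b = 0")
  case False
  then have "0 < b"
    using b by simp
  define \<tau> where "\<tau> = (b / a) powr (1 / (q - 1))"
  have remainder: "a powr (- 1 / (q - 1)) * b powr (q / (q - 1)) = \<tau> * b"
  proof -
    have "q / (q - 1) = 1 / (q - 1) + 1"
      using q by (simp add: field_simps)
    then have "b powr (q / (q - 1)) = b powr (1 / (q - 1)) * b"
      using \<open>0 < b\<close> by (simp add: powr_add)
    moreover have "a powr (- 1 / (q - 1)) = 1 / a powr (1 / (q - 1))"
      by (simp add: powr_minus_divide minus_divide_left[symmetric])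
    ultimately show ?thesis
      by (simp add: \<tau>_def powr_divide)
  qed
  have "0 \<le> a * u powr q" "0 \<le> \<tau> * b"
    using a b by (simp_all add: \<tau>_def)
  moreover have "u * b \<le> \<tau> * b" if "u \<le> \<tau>"
    using that b by (rule mult_right_mono)
  ultimately show ?thesis
    using mult_le_powr_above_threshold[OF a \<open>0 < b\<close> q, of u] remainder by (fastforce simp: \<tau>_def)
qed (use a u in simp)

text \<open>The hypothesis \<open>q / (q - 1) \<le> m\<close> leaves the factor \<open>T powr (m - q / (q - 1)) \<le> 1\<close>.\<close>

lemma young_remainder_le:
  fixes \<rho> H T L C \<alpha> q :: real and m :: nat
  assumes "0 < \<rho>" "0 < H" "0 < T" "T \<le> 1" "0 < L" "0 < C" "1 < q" "q / (q - 1) \<le> real m"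
  shows "(L * \<rho> powr (- \<alpha>) * H * T ^ m) powr (- 1 / (q - 1)) * (C * H * T ^ (m - 1)) powr (q / (q - 1))
    \<le> L powr (- 1 / (q - 1)) * C powr (q / (q - 1)) * H * \<rho> powr (\<alpha> / (q - 1))"
proof -
  define p where "p = 1 / (q - 1)"
  have qp: "q / (q - 1) = 1 + p" and mp: "- 1 / (q - 1) = - p" and \<alpha>p: "\<alpha> / (q - 1) = \<alpha> * p"
    using assms(7) by (simp_all add: p_def field_simps)
  have "1 < q / (q - 1)"
    using assms(7) by simp
  then have "1 < real m"
    using assms(8) by linarith
  then have "1 \<le> m"
    by simp
  have "0 \<le> real m - 1 - p"
    using assms(8) qp by simp
  moreover have "ln T \<le> 0"
    using assms(3,4) by simp
  ultimately have "(real m - 1 - p) * ln T \<le> 0"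
    by (simp add: mult_nonneg_nonpos)
  then have "- p * (ln L - \<alpha> * ln \<rho> + ln H + real m * ln T) + (1 + p) * (ln C + ln H + (real m - 1) * ln T)
      \<le> - p * ln L + (1 + p) * ln C + ln H + \<alpha> * p * ln \<rho>"
    by (simp add: algebra_simps)
  then show ?thesis
    unfolding qp mp \<alpha>p using assms \<open>1 \<le> m\<close>
    by (subst ln_le_cancel_iff[symmetric]) (simp_all add: ln_mult ln_realpow of_nat_diff)
qed

lemma young_cutoff_le:
  fixes \<rho> H T L C u \<alpha> q :: real and m :: nat
  assumes \<rho>: "0 < \<rho>" and H: "0 < H" and T: "0 \<le> T" "T \<le> 1" and L: "0 < L" and C: "0 \<le> C"
    and u: "0 \<le> u" and q: "1 < q" and m: "q / (q - 1) \<le> real m"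
  shows "C * (u * H * T ^ (m - 1)) \<le> L * (\<rho> powr (- \<alpha>) * u powr q * H * T ^ m)
           + L powr (- 1 / (q - 1)) * C powr (q / (q - 1)) * H * \<rho> powr (\<alpha> / (q - 1))"
proof (cases "T = 0 \<or> C = 0")
  case True
  have "1 < q / (q - 1)"
    using q by simp
  then have "1 < real m"
    using m by linarith
  then have "C * (u * H * T ^ (m - 1)) = 0"
    using True by auto
  moreover have "0 \<le> L * (\<rho> powr (- \<alpha>) * u powr q * H * T ^ m)"
    using L H T by simp
  moreover have "0 \<le> L powr (- 1 / (q - 1)) * C powr (q / (q - 1)) * H * \<rho> powr (\<alpha> / (q - 1))"
    using H by simp
  ultimately show ?thesis
    by linarith
next
  case False
  then have "0 < T" "0 < C"
    using T C by auto
  define a where "a = L * \<rho> powr (- \<alpha>) * H * T ^ m"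
  define b where "b = C * H * T ^ (m - 1)"
  have "0 < a" "0 < b"
    using L \<rho> H \<open>0 < T\<close> \<open>0 < C\<close> by (simp_all add: a_def b_def)
  then have "u * b \<le> a * u powr q + a powr (- 1 / (q - 1)) * b powr (q / (q - 1))"
    using young_powr_le[OF u _ _ q] by simp
  also have "a powr (- 1 / (q - 1)) * b powr (q / (q - 1))
      \<le> L powr (- 1 / (q - 1)) * C powr (q / (q - 1)) * H * \<rho> powr (\<alpha> / (q - 1))"
    unfolding a_def b_def using young_remainder_le[OF \<rho> H \<open>0 < T\<close> T(2) L \<open>0 < C\<close> q m] .
  finally show ?thesis
    by (simp add: a_def b_def mult_ac)
qed

lemma sum_coord_prod_enorm_powr_le:
  assumes "R \<ge> 1" and "k \<le> d" and "\<beta> \<ge> 0"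
  shows "(\<Sum>x\<in>orthant_ball d k R. coord_prod k x * enorm d x powr \<beta>) \<le> 5 ^ d * R powr (real d + real k + \<beta>)"
proof -
  have "coord_prod k x * enorm d x powr \<beta> \<le> R ^ k * R powr \<beta>" if x: "x \<in> orthant_ball d k R" for x
  proof -
    have x_orth: "x \<in> orthant d k" and "enorm d x < R"
      using x enorm_less_radius assms(1) by (auto simp: orthant_ball_def)
    then have "coord_prod k x \<le> R ^ k"
      using coord_prod_le_enorm_power[OF x_orth assms(2)] power_mono[of "enorm d x" R k]
      by (simp add: enorm_nonneg)
    moreover have "enorm d x powr \<beta> \<le> R powr \<beta>"
      using \<open>enorm d x < R\<close> assms(3) enorm_nonneg by (intro powr_mono2) auto
    ultimately show ?thesis
      using coord_prod_pos[OF x_orth] by (intro mult_mono) auto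
  qed
  then have "(\<Sum>x\<in>orthant_ball d k R. coord_prod k x * enorm d x powr \<beta>)
      \<le> (\<Sum>x\<in>orthant_ball d k R. R ^ k * R powr \<beta>)"
    by (rule sum_mono)
  also have "\<dots> = real (card (orthant_ball d k R)) * (R ^ k * R powr \<beta>)"
    by simp
  also have "\<dots> \<le> (5 * R) ^ d * (R ^ k * R powr \<beta>)"
    using card_orthant_ball_le[OF assms(1)] assms(1) by (intro mult_right_mono) auto
  also have "\<dots> = 5 ^ d * R powr (real d + real k + \<beta>)"
    using assms(1) by (simp add: powr_add powr_realpow power_mult_distrib)
  finally show ?thesis .
qed

section \<open>Nonexistence\<close>

lemma exists_radius_beyond:
  assumes "finite S"
  obtains R :: real where "1 \<le> R" "\<And>x. x \<in> S \<Longrightarrow> 2 * sqnorm d x < R\<^sup>2"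
proof
  define N where "N = (\<Sum>x\<in>S. sqnorm d x)"
  have "0 \<le> N"
    unfolding N_def by (intro sum_nonneg sqnorm_nonneg)
  then show "1 \<le> 2 * (1 + N)"
    by simp
  fix x assume "x \<in> S"
  then have "sqnorm d x \<le> N"
    unfolding N_def using assms by (intro member_le_sum sqnorm_nonneg)
  then have "2 * sqnorm d x < 4 * (1 + N)"
    using \<open>0 \<le> N\<close> by (simp add: distrib_left)
  also have "\<dots> \<le> (2 * (1 + N))\<^sup>2"
    using \<open>0 \<le> N\<close> mult_nonneg_nonneg[of N N] by (simp add: power2_eq_square algebra_simps)
  finally show "2 * sqnorm d x < (2 * (1 + N))\<^sup>2" .
qed

locale orthant_supersolution =
  fixes d k :: nat and q \<alpha> :: real and u :: "(nat \<Rightarrow> int) \<Rightarrow> real" and m :: nat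
  assumes k_pos: "1 \<le> k" and k_le_d: "k \<le> d" and q_gt_1: "1 < q" and \<alpha>_nonneg: "0 \<le> \<alpha>"
    and m_ge: "q / (q - 1) \<le> real m"
    and u_pos: "\<forall>x\<in>orthant d k. 0 < u x"
    and supersolution: "\<forall>x\<in>orthant d k. enorm d x powr (- \<alpha>) * u x powr q \<le> - lap d u x"
    and boundary_zero: "\<forall>y\<in>boundary d (orthant d k). u y = 0"
begin

definition source :: "(nat \<Rightarrow> int) \<Rightarrow> real" where
  "source x = enorm d x powr (- \<alpha>) * u x powr q * coord_prod k x"

definition cut_mass :: "real \<Rightarrow> real" where
  "cut_mass R = (\<Sum>x\<in>orthant_ball d k R. source x * cutoff d R x ^ m)"

definition energy :: "(nat \<Rightarrow> int) set \<Rightarrow> real \<Rightarrow> real" where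
  "energy S R = (\<Sum>x\<in>S. u x * coord_prod k x * cutoff d R x ^ (m - 1))"

definition lap_const :: real where
  "lap_const = real m * (2 * real d + 4 * real k) / (2 * real d)"

definition young_const :: real where
  "young_const = lap_const powr (q / (q - 1)) * 5 ^ d"

definition volume_exponent :: real where
  "volume_exponent = real d + real k + \<alpha> / (q - 1)"

definition scaling_exponent :: real where
  "scaling_exponent = volume_exponent - 2 * (q / (q - 1))"

lemma m_ge_2: "2 \<le> m"
proof -
  have "1 < q / (q - 1)"
    using q_gt_1 by simp
  then show ?thesis
    using m_ge by linarith
qed

lemma lap_const_pos: "0 < lap_const"
  using m_ge_2 k_pos k_le_d by (simp add: lap_const_def)

lemma young_const_pos: "0 < young_const"
  using lap_const_pos by (simp add: young_const_def)

lemma volume_exponent_pos: "0 < volume_exponent"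
  using k_pos q_gt_1 \<alpha>_nonneg by (simp add: volume_exponent_def add_pos_nonneg)

lemma source_nonneg: "x \<in> orthant d k \<Longrightarrow> 0 \<le> source x"
  using coord_prod_pos[of x d k] by (simp add: source_def)

lemma cut_mass_le_energy:
  assumes "0 < R"
  shows "cut_mass R \<le> lap_const / R\<^sup>2 * energy (orthant_ball d k R) R"
proof -
  have "(\<Sum>x\<in>orthant_ball d k R. enorm d x powr (- \<alpha>) * u x powr q * coord_prod k x * cutoff d R x ^ m)
      \<le> m * (2 * real d + 4 * real k) / (2 * real d * R\<^sup>2)
        * (\<Sum>x\<in>orthant_ball d k R. u x * coord_prod k x * cutoff d R x ^ (m - 1))"
    using u_pos supersolution boundary_zero m_ge_2 k_le_d assms
    by (intro weak_form_inequality) (auto intro: less_imp_le)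
  then show ?thesis
    by (simp add: cut_mass_def energy_def source_def lap_const_def)
qed

lemma energy_young_le_sum:
  assumes "S \<subseteq> orthant d k" and "0 < L"
  shows "lap_const / R\<^sup>2 * energy S R
    \<le> L * (\<Sum>x\<in>S. source x * cutoff d R x ^ m)
      + L powr (- 1 / (q - 1)) * (lap_const / R\<^sup>2) powr (q / (q - 1))
        * (\<Sum>x\<in>S. coord_prod k x * enorm d x powr (\<alpha> / (q - 1)))"
proof -
  let ?C = "lap_const / R\<^sup>2"
  have "?C * (u x * coord_prod k x * cutoff d R x ^ (m - 1))
      \<le> L * (source x * cutoff d R x ^ m)
        + L powr (- 1 / (q - 1)) * ?C powr (q / (q - 1)) * (coord_prod k x * enorm d x powr (\<alpha> / (q - 1)))"
    if x: "x \<in> S" for x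
  proof -
    have x_orth: "x \<in> orthant d k"
      using x assms(1) by auto
    have "?C * (u x * coord_prod k x * cutoff d R x ^ (m - 1))
        \<le> L * (enorm d x powr (- \<alpha>) * u x powr q * coord_prod k x * cutoff d R x ^ m)
          + L powr (- 1 / (q - 1)) * ?C powr (q / (q - 1)) * coord_prod k x * enorm d x powr (\<alpha> / (q - 1))"
    proof (rule young_cutoff_le)
      show "0 < enorm d x"
        using one_le_enorm[OF x_orth k_pos k_le_d] by simp
      show "0 \<le> u x"
        using u_pos x_orth by (simp add: less_imp_le)
    qed (use coord_prod_pos[OF x_orth] cutoff_nonneg cutoff_le_1 assms(2) lap_const_pos q_gt_1 m_ge in auto)
    then show ?thesis
      by (simp add: source_def mult_ac)
  qed
  then have "(\<Sum>x\<in>S. ?C * (u x * coord_prod k x * cutoff d R x ^ (m - 1)))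
      \<le> (\<Sum>x\<in>S. L * (source x * cutoff d R x ^ m)
        + L powr (- 1 / (q - 1)) * ?C powr (q / (q - 1)) * (coord_prod k x * enorm d x powr (\<alpha> / (q - 1))))"
    by (rule sum_mono)
  then show ?thesis
    by (simp add: energy_def sum.distrib sum_distrib_left)
qed

lemma young_remainder_scaling:
  assumes "0 < R" "0 < \<rho>"
  shows "(lap_const / R\<^sup>2) powr (q / (q - 1)) * (5 ^ d * \<rho> powr volume_exponent)
    = young_const * (\<rho> / R) powr volume_exponent * R powr scaling_exponent"
proof -
  have "R\<^sup>2 = R powr 2"
    using assms(1) by (simp add: powr_realpow)
  then have "(R\<^sup>2) powr (q / (q - 1)) = R powr (2 * (q / (q - 1)))"
    by (simp add: powr_powr)
  moreover have "(lap_const / R\<^sup>2) powr (q / (q - 1))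
      = lap_const powr (q / (q - 1)) / (R\<^sup>2) powr (q / (q - 1))"
    by (rule powr_divide)
  ultimately have C_powr:
    "(lap_const / R\<^sup>2) powr (q / (q - 1)) = lap_const powr (q / (q - 1)) * R powr (- 2 * (q / (q - 1)))"
    by (simp add: powr_minus divide_inverse)
  have \<rho>_powr: "\<rho> powr volume_exponent = (\<rho> / R) powr volume_exponent * R powr volume_exponent"
    using assms by (simp add: powr_divide)
  have R_powr: "R powr scaling_exponent = R powr volume_exponent * R powr (- 2 * (q / (q - 1)))"
    by (simp add: scaling_exponent_def flip: powr_add)
  show ?thesis
    unfolding C_powr \<rho>_powr R_powr by (simp add: young_const_def mult_ac)
qed

lemma energy_young_le:
  assumes R: "1 \<le> R" and \<rho>: "1 \<le> \<rho>" and S: "S \<subseteq> orthant_ball d k \<rho>" and L: "0 < L"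
  shows "lap_const / R\<^sup>2 * energy S R
    \<le> L * (\<Sum>x\<in>S. source x * cutoff d R x ^ m)
      + L powr (- 1 / (q - 1)) * young_const * (\<rho> / R) powr volume_exponent * R powr scaling_exponent"
proof -
  have "S \<subseteq> orthant d k"
    using S by (auto simp: orthant_ball_def)
  have "(\<Sum>x\<in>S. coord_prod k x * enorm d x powr (\<alpha> / (q - 1)))
      \<le> (\<Sum>x\<in>orthant_ball d k \<rho>. coord_prod k x * enorm d x powr (\<alpha> / (q - 1)))"
    using S finite_orthant_ball[of \<rho> d k] \<rho>
    by (intro sum_mono2)
      (auto simp: orthant_ball_def intro!: mult_nonneg_nonneg less_imp_le[OF coord_prod_pos])
  also have "\<dots> \<le> 5 ^ d * \<rho> powr volume_exponent"
    using sum_coord_prod_enorm_powr_le[OF \<rho> k_le_d] q_gt_1 \<alpha>_nonneg by (simp add: volume_exponent_def)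
  finally have "L powr (- 1 / (q - 1)) * (lap_const / R\<^sup>2) powr (q / (q - 1))
        * (\<Sum>x\<in>S. coord_prod k x * enorm d x powr (\<alpha> / (q - 1)))
      \<le> L powr (- 1 / (q - 1)) * (lap_const / R\<^sup>2) powr (q / (q - 1)) * (5 ^ d * \<rho> powr volume_exponent)"
    by (rule mult_left_mono) simp
  also have "\<dots>
      = L powr (- 1 / (q - 1)) * young_const * (\<rho> / R) powr volume_exponent * R powr scaling_exponent"
    using young_remainder_scaling[of R \<rho>] R \<rho> by (simp only: mult.assoc)
  finally show ?thesis
    using energy_young_le_sum[OF \<open>S \<subseteq> orthant d k\<close> L, of R] by linarith
qed

lemma cut_mass_le_power: "\<exists>C. \<forall>R\<ge>1. cut_mass R \<le> C * R powr scaling_exponent"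
proof (intro exI allI impI)
  fix R :: real
  assume R: "1 \<le> R"
  have "cut_mass R \<le> lap_const / R\<^sup>2 * energy (orthant_ball d k R) R"
    using R by (intro cut_mass_le_energy) simp
  also have "\<dots> \<le> 1 / 2 * cut_mass R + (1 / 2) powr (- 1 / (q - 1)) * young_const * R powr scaling_exponent"
    using energy_young_le[OF R R order_refl, of "1 / 2"] R by (simp add: cut_mass_def)
  finally show "cut_mass R \<le> (2 * ((1 / 2) powr (- 1 / (q - 1)) * young_const)) * R powr scaling_exponent"
    by simp
qed

lemma scaling_exponent_nonpos_iff:
  "scaling_exponent \<le> 0 \<longleftrightarrow> \<alpha> + q * (real d + real k - 2) \<le> real d + real k"
proof -
  have "scaling_exponent * (q - 1)
      = (real d + real k) * (q - 1) + \<alpha> / (q - 1) * (q - 1) - 2 * (q / (q - 1) * (q - 1))"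
    by (simp add: scaling_exponent_def volume_exponent_def algebra_simps)
  also have "\<dots> = \<alpha> + q * (real d + real k - 2) - (real d + real k)"
  proof -
    have "\<alpha> / (q - 1) * (q - 1) = \<alpha>" "q / (q - 1) * (q - 1) = q"
      using q_gt_1 by simp_all
    then show ?thesis
      by (simp add: algebra_simps)
  qed
  finally have "scaling_exponent * (q - 1) = \<alpha> + q * (real d + real k - 2) - (real d + real k)" .
  moreover have "scaling_exponent \<le> 0 \<longleftrightarrow> scaling_exponent * (q - 1) \<le> 0"
    using q_gt_1 by (simp add: mult_le_0_iff)
  ultimately show ?thesis
    by simp
qed

lemma powr_scaling_exponent_le_1:
  assumes "1 \<le> R" "scaling_exponent \<le> 0"
  shows "R powr scaling_exponent \<le> 1"
  using powr_mono[OF assms(2,1)] assms(1) by simp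

lemma cut_mass_bounded:
  assumes "scaling_exponent \<le> 0"
  obtains C where "\<And>R. 1 \<le> R \<Longrightarrow> cut_mass R \<le> C"
proof -
  obtain C where C: "\<And>R. 1 \<le> R \<Longrightarrow> cut_mass R \<le> C * R powr scaling_exponent"
    using cut_mass_le_power by blast
  have "cut_mass R \<le> max 0 C" if "1 \<le> R" for R
  proof -
    have "R powr scaling_exponent \<le> 1"
      using that assms by (rule powr_scaling_exponent_le_1)
    then have "C * R powr scaling_exponent \<le> max 0 C"
      by (cases "0 \<le> C") (auto intro: mult_left_le order_trans[OF mult_nonpos_nonneg])
    then show ?thesis
      using C[OF that] by linarith
  qed
  then show ?thesis
    using that by blast
qed

lemma half_le_cutoff:
  assumes "0 < R" "2 * sqnorm d x \<le> R\<^sup>2"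
  shows "1 / 2 \<le> cutoff d R x"
proof -
  have "sqnorm d x / R\<^sup>2 \<le> 1 / 2"
    using assms by (simp add: field_simps)
  then show ?thesis
    by (simp add: cutoff_def le_max_iff_disj)
qed

lemma source_le_cut:
  assumes "x \<in> orthant d k" "0 < R" "2 * sqnorm d x \<le> R\<^sup>2"
  shows "source x \<le> 2 ^ m * (source x * cutoff d R x ^ m)"
proof -
  have "(1 / 2) ^ m \<le> cutoff d R x ^ m"
    using half_le_cutoff[OF assms(2,3)] by (intro power_mono) auto
  then have "1 \<le> 2 ^ m * cutoff d R x ^ m"
    by (simp add: field_simps)
  then show ?thesis
    using mult_left_mono[OF _ source_nonneg[OF assms(1)]] by (fastforce simp: mult_ac)
qed

lemma sum_source_bounded:
  assumes "scaling_exponent \<le> 0"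
  obtains M where "\<And>S. finite S \<Longrightarrow> S \<subseteq> orthant d k \<Longrightarrow> (\<Sum>x\<in>S. source x) \<le> M"
proof -
  obtain C where C: "\<And>R. 1 \<le> R \<Longrightarrow> cut_mass R \<le> C"
    using cut_mass_bounded[OF assms] by blast
  have "(\<Sum>x\<in>S. source x) \<le> 2 ^ m * C" if S: "finite S" "S \<subseteq> orthant d k" for S
  proof -
    obtain R where R: "1 \<le> R" and small: "\<And>x. x \<in> S \<Longrightarrow> 2 * sqnorm d x < R\<^sup>2"
      using exists_radius_beyond[OF S(1)] by blast
    have "S \<subseteq> orthant_ball d k R"
    proof
      fix x assume "x \<in> S"
      then have "sqnorm d x < R\<^sup>2"
        using small[of x] sqnorm_nonneg[of d x] by linarith
      then show "x \<in> orthant_ball d k R"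
        using \<open>x \<in> S\<close> S(2) by (auto simp: orthant_ball_def)
    qed
    have "(\<Sum>x\<in>S. source x) \<le> 2 ^ m * (\<Sum>x\<in>S. source x * cutoff d R x ^ m)"
      unfolding sum_distrib_left using S(2) small R
      by (intro sum_mono source_le_cut) (auto intro: less_imp_le)
    also have "\<dots> \<le> 2 ^ m * cut_mass R"
      unfolding cut_mass_def using \<open>S \<subseteq> orthant_ball d k R\<close> finite_orthant_ball[of R d k] R
      by (intro mult_left_mono sum_mono2) (auto simp: orthant_ball_def source_nonneg cutoff_nonneg)
    also have "\<dots> \<le> 2 ^ m * C"
      using C[OF R] by simp
    finally show ?thesis .
  qed
  then show ?thesis
    using that by blast
qed

lemma cut_mass_eventually_ge:
  obtains c R\<^sub>0 where "0 < c" and "\<And>R. R\<^sub>0 \<le> R \<Longrightarrow> c \<le> cut_mass R"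
proof -
  define x\<^sub>0 :: "nat \<Rightarrow> int" where "x\<^sub>0 i = (if i < k then 1 else 0)" for i
  have x\<^sub>0: "x\<^sub>0 \<in> orthant d k"
    using k_le_d by (auto simp: x\<^sub>0_def orthant_def lattice_def)
  have "sqnorm d x\<^sub>0 = (\<Sum>i<d. if i < k then 1 else 0)"
    unfolding sqnorm_def by (intro sum.cong) (auto simp: x\<^sub>0_def)
  then have sqnorm_x\<^sub>0: "sqnorm d x\<^sub>0 = k"
    using sum_lessThan_if_less[OF k_le_d, of 1 0] by simp
  have "0 < enorm d x\<^sub>0"
    using one_le_enorm[OF x\<^sub>0 k_pos k_le_d] by simp
  moreover have "0 < u x\<^sub>0"
    using u_pos x\<^sub>0 by simp
  ultimately have "0 < source x\<^sub>0"
    using coord_prod_pos[OF x\<^sub>0] by (simp add: source_def)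
  moreover have "source x\<^sub>0 / 2 ^ m \<le> cut_mass R" if R: "2 * real k \<le> R" for R
  proof -
    have "1 \<le> R"
      using R k_pos by linarith
    then have "2 * real k \<le> R\<^sup>2"
    proof -
      have "R \<le> R * R"
        using \<open>1 \<le> R\<close> mult_right_mono[of 1 R R] by simp
      then show ?thesis
        using R by (simp add: power2_eq_square)
    qed
    then have small: "2 * sqnorm d x\<^sub>0 \<le> R\<^sup>2" and "x\<^sub>0 \<in> orthant_ball d k R"
      using x\<^sub>0 k_pos by (auto simp: sqnorm_x\<^sub>0 orthant_ball_def)
    have "source x\<^sub>0 \<le> 2 ^ m * (source x\<^sub>0 * cutoff d R x\<^sub>0 ^ m)"
      using source_le_cut[OF x\<^sub>0 _ small] \<open>1 \<le> R\<close> by simp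
    also have "\<dots> \<le> 2 ^ m * cut_mass R"
      unfolding cut_mass_def using \<open>x\<^sub>0 \<in> orthant_ball d k R\<close> finite_orthant_ball[of R d k] \<open>1 \<le> R\<close>
      by (intro mult_left_mono member_le_sum) (auto simp: orthant_ball_def source_nonneg cutoff_nonneg)
    finally show ?thesis
      by (simp add: field_simps)
  qed
  ultimately show ?thesis
    using that[of "source x\<^sub>0 / 2 ^ m" "2 * real k"] by simp
qed

lemma sum_cut_source_le:
  assumes "S \<subseteq> orthant d k"
  shows "(\<Sum>x\<in>S. source x * cutoff d R x ^ m) \<le> (\<Sum>x\<in>S. source x)"
  using assms source_nonneg cutoff_nonneg cutoff_le_1
  by (intro sum_mono mult_right_le_one_le power_le_one) auto

lemma inner_energy_le:
  assumes E: "scaling_exponent \<le> 0"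
    and M: "\<And>S. finite S \<Longrightarrow> S \<subseteq> orthant d k \<Longrightarrow> (\<Sum>x\<in>S. source x) \<le> M"
    and R: "1 \<le> R" and \<epsilon>: "0 < \<epsilon>" "1 \<le> \<epsilon> * R" and L: "0 < L"
  shows "lap_const / R\<^sup>2 * energy (orthant_ball d k (\<epsilon> * R)) R
    \<le> L * M + L powr (- 1 / (q - 1)) * young_const * \<epsilon> powr volume_exponent"
proof -
  let ?inner = "orthant_ball d k (\<epsilon> * R)"
  have sum_le: "(\<Sum>x\<in>?inner. source x * cutoff d R x ^ m) \<le> M"
  proof -
    have "?inner \<subseteq> orthant d k"
      by (auto simp: orthant_ball_def)
    moreover have "finite ?inner"
      using \<epsilon> by (intro finite_orthant_ball) simp
    ultimately show ?thesis
      using sum_cut_source_le M by (meson order_trans)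
  qed
  have "R powr scaling_exponent \<le> 1"
    using R E by (rule powr_scaling_exponent_le_1)
  then have "L powr (- 1 / (q - 1)) * young_const * (\<epsilon> * R / R) powr volume_exponent * R powr scaling_exponent
      \<le> L powr (- 1 / (q - 1)) * young_const * \<epsilon> powr volume_exponent"
    using R young_const_pos by (simp add: mult_left_le)
  moreover have "L * (\<Sum>x\<in>?inner. source x * cutoff d R x ^ m) \<le> L * M"
    using sum_le L by (simp add: mult_left_mono)
  ultimately show ?thesis
    using energy_young_le[OF R \<epsilon>(2) order_refl L] by linarith
qed

lemma outer_energy_le:
  assumes E: "scaling_exponent \<le> 0" and R: "1 \<le> R" and L: "0 < L"
  shows "lap_const / R\<^sup>2 * energy (orthant_ball d k R - S) R
    \<le> L * (\<Sum>x\<in>orthant_ball d k R - S. source x) + L powr (- 1 / (q - 1)) * young_const"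
proof -
  let ?ann = "orthant_ball d k R - S"
  have "(\<Sum>x\<in>?ann. source x * cutoff d R x ^ m) \<le> (\<Sum>x\<in>?ann. source x)"
    by (rule sum_cut_source_le) (auto simp: orthant_ball_def)
  then have "L * (\<Sum>x\<in>?ann. source x * cutoff d R x ^ m) \<le> L * (\<Sum>x\<in>?ann. source x)"
    using L by (simp add: mult_left_mono)
  moreover have "R powr scaling_exponent \<le> 1"
    using R E by (rule powr_scaling_exponent_le_1)
  then have "L powr (- 1 / (q - 1)) * young_const * (R / R) powr volume_exponent * R powr scaling_exponent
      \<le> L powr (- 1 / (q - 1)) * young_const"
    using R young_const_pos by (simp add: mult_left_le)
  moreover have "lap_const / R\<^sup>2 * energy ?ann R
      \<le> L * (\<Sum>x\<in>?ann. source x * cutoff d R x ^ m)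
        + L powr (- 1 / (q - 1)) * young_const * (R / R) powr volume_exponent * R powr scaling_exponent"
    using R L by (intro energy_young_le) auto
  ultimately show ?thesis
    by linarith
qed

text \<open>When \<open>scaling_exponent \<le> 0\<close> the Young remainder is bounded but not small.  On the inner
  ball of radius \<open>\<epsilon> R\<close> it carries the factor \<open>\<epsilon> powr volume_exponent\<close> and the mass there is
  bounded, so for small \<open>\<epsilon>\<close> the lower bound on \<open>cut_mass\<close> must come from the annulus.\<close>

lemma annulus_source_ge:
  assumes E: "scaling_exponent \<le> 0"
  obtains \<epsilon> \<tau> R\<^sub>0 where "0 < \<epsilon>" "\<epsilon> \<le> 1" "0 < \<tau>" "1 \<le> R\<^sub>0"
    and "\<And>R. R\<^sub>0 \<le> R \<Longrightarrow> \<tau> \<le> (\<Sum>x\<in>orthant_ball d k R - orthant_ball d k (\<epsilon> * R). source x)"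
proof -
  obtain c R\<^sub>c where c: "0 < c" and c_le: "\<And>R. R\<^sub>c \<le> R \<Longrightarrow> c \<le> cut_mass R"
    using cut_mass_eventually_ge by blast
  obtain M where M: "\<And>S. finite S \<Longrightarrow> S \<subseteq> orthant d k \<Longrightarrow> (\<Sum>x\<in>S. source x) \<le> M"
    using sum_source_bounded[OF E] by blast
  let ?B = young_const and ?p = "- 1 / (q - 1)"
  define L\<^sub>1 where "L\<^sub>1 = c / (4 * max 1 M)"
  define L\<^sub>2 where "L\<^sub>2 = (4 * ?B / c) powr (q - 1)"
  have L\<^sub>1: "0 < L\<^sub>1" "L\<^sub>1 * M \<le> c / 4"
    using c by (auto simp: L\<^sub>1_def field_simps max_def)
  have L\<^sub>2: "0 < L\<^sub>2" "L\<^sub>2 powr ?p * ?B = c / 4"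
    using c young_const_pos q_gt_1 by (auto simp: L\<^sub>2_def powr_powr powr_minus_divide)
  define Y where "Y = c / (4 * (L\<^sub>1 powr ?p * ?B))"
  have Y: "0 < Y"
    using c L\<^sub>1 young_const_pos by (simp add: Y_def)
  define \<epsilon> where "\<epsilon> = min 1 (Y powr (1 / volume_exponent))"
  have \<epsilon>: "0 < \<epsilon>" "\<epsilon> \<le> 1"
    using Y by (auto simp: \<epsilon>_def)
  have "\<epsilon> powr volume_exponent \<le> (Y powr (1 / volume_exponent)) powr volume_exponent"
    using \<epsilon> volume_exponent_pos by (intro powr_mono2) (auto simp: \<epsilon>_def)
  then have "\<epsilon> powr volume_exponent \<le> Y"
    using volume_exponent_pos Y by (simp add: powr_powr)
  then have \<epsilon>_small: "L\<^sub>1 powr ?p * ?B * \<epsilon> powr volume_exponent \<le> c / 4"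
    using L\<^sub>1 young_const_pos by (simp add: Y_def field_simps)
  define R\<^sub>0 where "R\<^sub>0 = max (max 1 R\<^sub>c) (1 / \<epsilon>)"
  have "c / (4 * L\<^sub>2) \<le> (\<Sum>x\<in>orthant_ball d k R - orthant_ball d k (\<epsilon> * R). source x)"
    if R: "R\<^sub>0 \<le> R" for R
  proof -
    let ?ball = "orthant_ball d k R" and ?inner = "orthant_ball d k (\<epsilon> * R)"
    have R1: "1 \<le> R" and "R\<^sub>c \<le> R" and \<epsilon>R: "1 \<le> \<epsilon> * R"
      using R \<epsilon> by (auto simp: R\<^sub>0_def field_simps)
    have "?inner \<subseteq> ?ball"
      using \<epsilon> \<epsilon>R R1 by (intro orthant_ball_mono) (auto simp: mult_le_cancel_right1)
    then have "energy ?ball R = energy (?ball - ?inner) R + energy ?inner R"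
      unfolding energy_def using finite_orthant_ball[of R d k] R1 by (simp add: sum.subset_diff)
    then have "cut_mass R
        \<le> lap_const / R\<^sup>2 * energy (?ball - ?inner) R + lap_const / R\<^sup>2 * energy ?inner R"
      using cut_mass_le_energy[of R] R1 by (simp add: distrib_left)
    then have "c \<le> L\<^sub>2 * (\<Sum>x\<in>?ball - ?inner. source x) + 3 * c / 4"
      using c_le[OF \<open>R\<^sub>c \<le> R\<close>] L\<^sub>1(2) L\<^sub>2(2) \<epsilon>_small
        inner_energy_le[OF E M R1 \<epsilon>(1) \<epsilon>R L\<^sub>1(1)] outer_energy_le[OF E R1 L\<^sub>2(1), of ?inner]
      by linarith
    then show ?thesis
      using L\<^sub>2 by (simp add: field_simps)
  qed
  moreover have "1 \<le> R\<^sub>0" "0 < c / (4 * L\<^sub>2)"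
    using c L\<^sub>2 by (auto simp: R\<^sub>0_def)
  ultimately show ?thesis
    using that \<epsilon> by blast
qed

text \<open>The annuli between the radii \<open>R\<^sub>0 / \<epsilon>\<^sup>j\<close> are disjoint, so the bounded total mass would exceed \<open>j \<tau>\<close>.\<close>

theorem exponent_condition: "real d + real k < \<alpha> + q * (real d + real k - 2)"
proof (rule ccontr)
  assume "\<not> ?thesis"
  then have E: "scaling_exponent \<le> 0"
    by (simp add: scaling_exponent_nonpos_iff)
  obtain M where M: "\<And>S. finite S \<Longrightarrow> S \<subseteq> orthant d k \<Longrightarrow> (\<Sum>x\<in>S. source x) \<le> M"
    using sum_source_bounded[OF E] by blast
  obtain \<epsilon> \<tau> R\<^sub>0 where \<epsilon>: "0 < \<epsilon>" "\<epsilon> \<le> 1" and \<tau>: "0 < \<tau>" and R\<^sub>0: "1 \<le> R\<^sub>0"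
    and annulus: "\<And>R. R\<^sub>0 \<le> R \<Longrightarrow> \<tau> \<le> (\<Sum>x\<in>orthant_ball d k R - orthant_ball d k (\<epsilon> * R). source x)"
    using annulus_source_ge[OF E] by blast
  define R where "R j = R\<^sub>0 / \<epsilon> ^ j" for j
  have R_ge: "R\<^sub>0 \<le> R j" for j
    using \<epsilon> R\<^sub>0 by (simp add: R_def field_simps power_le_one mult_left_le)
  have "real j * \<tau> \<le> (\<Sum>x\<in>orthant_ball d k (R j). source x)" for j
  proof (induction j)
    case 0
    show ?case
      by (auto intro!: sum_nonneg source_nonneg simp: orthant_ball_def)
  next
    case (Suc j)
    have shrink: "\<epsilon> * R (Suc j) = R j"
      using \<epsilon> by (simp add: R_def field_simps)
    have "orthant_ball d k (R j) \<subseteq> orthant_ball d k (R (Suc j))"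
      using \<epsilon> R_ge[of j] R_ge[of "Suc j"] R\<^sub>0 shrink[symmetric]
      by (intro orthant_ball_mono) (auto simp: mult_left_le_one_le)
    then have "(\<Sum>x\<in>orthant_ball d k (R (Suc j)). source x)
        = (\<Sum>x\<in>orthant_ball d k (R (Suc j)) - orthant_ball d k (R j). source x)
          + (\<Sum>x\<in>orthant_ball d k (R j). source x)"
      using finite_orthant_ball[of "R (Suc j)" d k] R_ge[of "Suc j"] R\<^sub>0 by (simp add: sum.subset_diff)
    then show ?case
      using Suc annulus[OF R_ge[of "Suc j"]] shrink by (simp add: algebra_simps)
  qed
  moreover have "(\<Sum>x\<in>orthant_ball d k (R j). source x) \<le> M" for j
    using M finite_orthant_ball[of "R j" d k] R_ge[of j] R\<^sub>0 by (simp add: orthant_ball_def)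
  ultimately have "real j * \<tau> \<le> M" for j
    by (meson order_trans)
  moreover obtain j :: nat where "M / \<tau> < j"
    using reals_Archimedean2 by blast
  ultimately show False
    using \<tau> by (smt (verit) pos_divide_less_eq)
qed

end

section \<open>Existence\<close>

lemma powr_neg_taylor_le:
  fixes t \<delta> \<beta> \<mu> :: real
  assumes t: "0 < t" and \<mu>: "0 < \<mu>" "\<mu> \<le> 1" and \<delta>: "\<mu> * t \<le> t + \<delta>" and \<beta>: "0 < \<beta>"
  shows "(t + \<delta>) powr (- \<beta>) \<le> t powr (- \<beta>) - \<beta> * t powr (- \<beta> - 1) * \<delta>
           + \<beta> * (\<beta> + 1) / 2 * \<mu> powr (- \<beta> - 2) * t powr (- \<beta> - 2) * \<delta>\<^sup>2"
proof (cases "\<delta> = 0")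
  case False
  define D where "D n s = (if n = 0 then s powr (- \<beta>) else if n = 1 then - \<beta> * s powr (- \<beta> - 1)
     else \<beta> * (\<beta> + 1) * s powr (- \<beta> - 2))" for n :: nat and s :: real
  have \<mu>t: "0 < \<mu> * t" "\<mu> * t \<le> min t (t + \<delta>)"
    using \<delta> t \<mu> by (auto intro: mult_left_le_one_le)
  have "\<forall>m s. m < 2 \<and> min t (t + \<delta>) \<le> s \<and> s \<le> max t (t + \<delta>) \<longrightarrow> DERIV (D m) s :> D (Suc m) s"
  proof (intro allI impI)
    fix m :: nat and s :: real
    assume ms: "m < 2 \<and> min t (t + \<delta>) \<le> s \<and> s \<le> max t (t + \<delta>)"
    then have "0 < s" "m = 0 \<or> m = 1"
      using \<mu>t by auto
    then show "DERIV (D m) s :> D (Suc m) s"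
      by (auto simp: D_def[abs_def] algebra_simps intro!: derivative_eq_intros)
  qed
  then obtain \<xi> where \<xi>: "min t (t + \<delta>) < \<xi>"
    and taylor: "D 0 (t + \<delta>)
      = (\<Sum>m<2. D m t / fact m * (t + \<delta> - t) ^ m) + D 2 \<xi> / fact 2 * (t + \<delta> - t) ^ 2"
    using Taylor[of 2 D "D 0" "min t (t + \<delta>)" "max t (t + \<delta>)" t "t + \<delta>"] False
    by (auto split: if_splits)
  have "\<xi> powr (- \<beta> - 2) \<le> (\<mu> * t) powr (- \<beta> - 2)"
    using \<xi> \<mu>t \<beta> by (intro powr_mono2') auto
  also have "\<dots> = \<mu> powr (- \<beta> - 2) * t powr (- \<beta> - 2)"
    using \<mu> t by (simp add: powr_mult)
  finally have "\<beta> * (\<beta> + 1) / 2 * \<xi> powr (- \<beta> - 2) * \<delta>\<^sup>2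
      \<le> \<beta> * (\<beta> + 1) / 2 * (\<mu> powr (- \<beta> - 2) * t powr (- \<beta> - 2)) * \<delta>\<^sup>2"
    using \<beta> by (intro mult_right_mono mult_left_mono) auto
  moreover have "(t + \<delta>) powr (- \<beta>)
      = t powr (- \<beta>) - \<beta> * t powr (- \<beta> - 1) * \<delta> + \<beta> * (\<beta> + 1) / 2 * \<xi> powr (- \<beta> - 2) * \<delta>\<^sup>2"
    using taylor by (simp add: D_def numeral_2_eq_2 lessThan_Suc algebra_simps)
  ultimately show ?thesis
    by (simp add: algebra_simps)
qed simp

lemma ratio_le_shift_sqnorm:
  assumes "0 < \<mu>" "\<mu> < 1" "4 / (1 - \<mu>)\<^sup>2 \<le> c" "i < d" "e \<in> {1, -1}"
  shows "\<mu> * (c + sqnorm d x) \<le> c + sqnorm d (shift x i e)"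
proof -
  define a where "a = real_of_int (x i)"
  define w where "w = 1 - \<mu>"
  have w: "0 < w" "w \<le> 1"
    using assms(1,2) by (simp_all add: w_def)
  have "0 \<le> w * (\<bar>a\<bar> - 1 / w)\<^sup>2"
    using w by simp
  also have "\<dots> = w * a\<^sup>2 - 2 * \<bar>a\<bar> + 1 / w"
    using w by (simp add: power2_eq_square field_simps)
  finally have "2 * \<bar>a\<bar> + 1 \<le> w * a\<^sup>2 + 1 / w + 1"
    by simp
  also have "\<dots> \<le> w * a\<^sup>2 + w * (4 / w\<^sup>2)"
  proof -
    have "1 \<le> 3 / w"
      using w by (simp add: le_divide_eq)
    moreover have "w * (4 / w\<^sup>2) = 1 / w + 3 / w"
      using w by (simp add: power2_eq_square field_simps)
    ultimately show ?thesis
      by simp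
  qed
  also have "\<dots> \<le> w * sqnorm d x + w * c"
  proof (intro add_mono mult_left_mono)
    show "a\<^sup>2 \<le> sqnorm d x"
      using coord_sq_le_sqnorm[OF assms(4)] by (simp add: a_def)
    show "4 / w\<^sup>2 \<le> c"
      using assms(3) by (simp add: w_def)
  qed (use w in auto)
  also have "\<dots> = w * (c + sqnorm d x)"
    by (simp add: algebra_simps)
  finally have "2 * \<bar>a\<bar> + 1 \<le> (1 - \<mu>) * (c + sqnorm d x)"
    by (simp add: w_def)
  moreover have "sqnorm d (shift x i e) = sqnorm d x + 2 * e * a + 1"
    using assms(4,5) by (auto simp: sqnorm_shift a_def)
  moreover have "- (2 * \<bar>a\<bar>) \<le> 2 * e * a"
    using assms(5) by auto
  ultimately show ?thesis
    by (simp add: algebra_simps)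
qed

definition barrier :: "nat \<Rightarrow> nat \<Rightarrow> real \<Rightarrow> real \<Rightarrow> (nat \<Rightarrow> int) \<Rightarrow> real" where
  "barrier d k c \<beta> x = coord_prod k x * (c + sqnorm d x) powr (- \<beta>)"

lemma lap_scale: "lap d (\<lambda>y. a * f y) x = a * lap d f x"
proof -
  have "(\<Sum>y\<in>{y \<in> lattice d. l1dist d x y = 1}. a * f y - a * f x)
      = a * (\<Sum>y\<in>{y \<in> lattice d. l1dist d x y = 1}. f y - f x)"
    by (simp add: sum_distrib_left right_diff_distrib)
  then show ?thesis
    unfolding lap_def by simp
qed

lemma barrier_shift_taylor_le:
  fixes x :: "nat \<Rightarrow> int"
  assumes \<mu>: "0 < \<mu>" "\<mu> < 1" and c: "4 / (1 - \<mu>)\<^sup>2 \<le> c" and \<beta>: "0 < \<beta>"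
    and i: "i < d" and e: "e \<in> {1, -1}"
  defines "t \<equiv> c + sqnorm d x" and "\<delta> \<equiv> 2 * real_of_int e * real_of_int (x i) + 1"
  shows "(c + sqnorm d (shift x i e)) powr (- \<beta>)
    \<le> t powr (- \<beta>) - \<beta> * t powr (- \<beta> - 1) * \<delta>
      + \<beta> * (\<beta> + 1) / 2 * \<mu> powr (- \<beta> - 2) * t powr (- \<beta> - 2) * \<delta>\<^sup>2"
proof -
  have "0 < 4 / (1 - \<mu>)\<^sup>2"
    using \<mu> by simp
  then have t: "0 < t"
    using c sqnorm_nonneg[of d x] unfolding t_def by linarith
  have "c + sqnorm d (shift x i e) = t + \<delta>"
    using i e by (auto simp: t_def \<delta>_def sqnorm_shift)
  moreover have "\<mu> * t \<le> t + \<delta>"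
    using ratio_le_shift_sqnorm[OF \<mu> c i e, of x] \<open>c + sqnorm d (shift x i e) = t + \<delta>\<close>
    by (simp add: t_def)
  ultimately show ?thesis
    using powr_neg_taylor_le[OF t \<mu>(1) less_imp_le[OF \<mu>(2)] _ \<beta>] by simp
qed

lemma sum_barrier_shifts_le:
  assumes x: "x \<in> orthant d k" and "k \<le> d" and \<beta>: "0 < \<beta>" and \<mu>: "0 < \<mu>" "\<mu> < 1"
    and c: "4 / (1 - \<mu>)\<^sup>2 \<le> c" and c_large: "2 * real d + 8 * real k \<le> 8 * c"
  defines "t \<equiv> c + sqnorm d x" and "h \<equiv> coord_prod k x"
  shows "(\<Sum>i<d. barrier d k c \<beta> (shift x i 1) + barrier d k c \<beta> (shift x i (-1)))
    \<le> 2 * real d * h * t powr (- \<beta>)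
      - \<beta> * ((2 * real d + 4 * real k) - 4 * (\<beta> + 1) * \<mu> powr (- \<beta> - 2)) * h * t powr (- \<beta> - 1)"
proof -
  define B where "B = \<beta> * t powr (- \<beta> - 1)"
  define Q where "Q = \<beta> * (\<beta> + 1) / 2 * \<mu> powr (- \<beta> - 2) * t powr (- \<beta> - 2)"
  let ?hp = "\<lambda>i. coord_prod k (shift x i 1)" and ?hm = "\<lambda>i. coord_prod k (shift x i (-1))"
  let ?dp = "\<lambda>i. 2 * real_of_int (x i) + 1" and ?dm = "\<lambda>i. 1 - 2 * real_of_int (x i)"
  have t: "0 < t"
  proof -
    have "0 < 4 / (1 - \<mu>)\<^sup>2"
      using \<mu> by simp
    then show ?thesis
      using c sqnorm_nonneg[of d x] unfolding t_def by linarith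
  qed
  have "(\<Sum>i<d. barrier d k c \<beta> (shift x i 1) + barrier d k c \<beta> (shift x i (-1)))
      \<le> (\<Sum>i<d. ?hp i * (t powr (- \<beta>) - B * ?dp i + Q * (?dp i)\<^sup>2)
             + ?hm i * (t powr (- \<beta>) - B * ?dm i + Q * (?dm i)\<^sup>2))"
  proof (intro sum_mono add_mono)
    fix i assume "i \<in> {..<d}"
    then have i: "i < d"
      by simp
    have "(c + sqnorm d (shift x i 1)) powr (- \<beta>) \<le> t powr (- \<beta>) - B * ?dp i + Q * (?dp i)\<^sup>2"
      "(c + sqnorm d (shift x i (-1))) powr (- \<beta>) \<le> t powr (- \<beta>) - B * ?dm i + Q * (?dm i)\<^sup>2"
      using barrier_shift_taylor_le[OF \<mu> c \<beta> i, of 1 x] barrier_shift_taylor_le[OF \<mu> c \<beta> i, of "-1" x]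
      by (simp_all add: t_def B_def Q_def mult_ac)
    then show "barrier d k c \<beta> (shift x i 1) \<le> ?hp i * (t powr (- \<beta>) - B * ?dp i + Q * (?dp i)\<^sup>2)"
      "barrier d k c \<beta> (shift x i (-1)) \<le> ?hm i * (t powr (- \<beta>) - B * ?dm i + Q * (?dm i)\<^sup>2)"
      unfolding barrier_def using coord_prod_shift_nonneg[OF x i] by (simp_all add: mult_left_mono)
  qed
  also have "\<dots> = t powr (- \<beta>) * (\<Sum>i<d. ?hp i + ?hm i) - B * (\<Sum>i<d. ?hp i * ?dp i + ?hm i * ?dm i)
      + Q * (\<Sum>i<d. ?hp i * (?dp i)\<^sup>2 + ?hm i * (?dm i)\<^sup>2)"
    by (simp add: sum.distrib sum_subtractf sum_distrib_left algebra_simps)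
  also have "\<dots> = 2 * real d * h * t powr (- \<beta>) - B * (2 * real d + 4 * real k) * h
      + Q * h * (8 * sqnorm d x + 2 * real d + 8 * real k)"
    unfolding sum_coord_prod_shifts sum_coord_prod_shifts_linear[OF \<open>k \<le> d\<close>]
      sum_coord_prod_shifts_quadratic[OF \<open>k \<le> d\<close>] by (simp add: h_def)
  also have "\<dots> \<le> 2 * real d * h * t powr (- \<beta>) - B * (2 * real d + 4 * real k) * h + Q * h * (8 * t)"
    using \<beta> \<mu> t coord_prod_pos[OF x] c_large by (auto simp: Q_def h_def t_def intro!: mult_left_mono)
  also have "Q * h * (8 * t) = 4 * \<beta> * (\<beta> + 1) * \<mu> powr (- \<beta> - 2) * h * t powr (- \<beta> - 1)"
  proof -
    have "t powr (- \<beta> - 1) = t powr (- \<beta> - 2 + 1)"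
      by (rule arg_cong[where f = "\<lambda>e. t powr e"]) simp
    also have "\<dots> = t powr (- \<beta> - 2) * t powr 1"
      by (rule powr_add)
    finally have "t powr (- \<beta> - 1) = t powr (- \<beta> - 2) * t powr 1" .
    then show ?thesis
      using t by (simp add: Q_def algebra_simps)
  qed
  finally show ?thesis
    by (simp add: B_def algebra_simps)
qed

lemma lap_barrier_le:
  assumes x: "x \<in> orthant d k" and "k \<le> d" and \<beta>: "0 < \<beta>" and \<mu>: "0 < \<mu>" "\<mu> < 1"
    and c: "4 / (1 - \<mu>)\<^sup>2 \<le> c" and c_large: "2 * real d + 8 * real k \<le> 8 * c"
  shows "lap d (barrier d k c \<beta>) x
    \<le> - \<beta> * ((2 * real d + 4 * real k) - 4 * (\<beta> + 1) * \<mu> powr (- \<beta> - 2)) / (2 * real d)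
        * coord_prod k x * (c + sqnorm d x) powr (- \<beta> - 1)"
proof -
  have x_lattice: "x \<in> lattice d"
    using x by (simp add: orthant_def)
  have "lap d (barrier d k c \<beta>) x
      = ((\<Sum>i<d. barrier d k c \<beta> (shift x i 1) + barrier d k c \<beta> (shift x i (-1)))
          - 2 * real d * barrier d k c \<beta> x) / (2 * real d)"
    by (simp add: lap_eq_sum_shifts[OF x_lattice] sum_subtractf)
  also have "\<dots> \<le> (- \<beta> * ((2 * real d + 4 * real k) - 4 * (\<beta> + 1) * \<mu> powr (- \<beta> - 2))
      * coord_prod k x * (c + sqnorm d x) powr (- \<beta> - 1)) / (2 * real d)"
    using sum_barrier_shifts_le[OF assms]
    by (intro divide_right_mono) (simp_all add: barrier_def algebra_simps)
  finally show ?thesis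
    by simp
qed

lemma mult_le_half_sum_abs:
  fixes \<sigma> a b c :: real
  assumes "2 * a \<le> b" "b \<le> c + 2 * a" "0 \<le> c"
  shows "\<sigma> * a \<le> \<sigma> / 2 * b + \<bar>\<sigma>\<bar> / 2 * c"
proof (cases "0 \<le> \<sigma>")
  case True
  then have "\<sigma> * (2 * a) \<le> \<sigma> * b" "0 \<le> \<bar>\<sigma>\<bar> / 2 * c"
    using assms by (simp_all add: mult_left_mono)
  then show ?thesis
    by linarith
next
  case False
  then have "\<sigma> * (2 * a) \<le> \<sigma> * (b - c)"
    using assms(2) by (intro mult_left_mono_neg) auto
  then show ?thesis
    using False by (simp add: algebra_simps)
qed

lemma barrier_source_log_le:
  fixes Lr Lh Lt Lc L\<epsilon> L\<^sub>1 q \<alpha> \<beta> :: real and k :: nat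
  defines "\<sigma> \<equiv> real k * (q - 1) - \<alpha>"
  assumes "1 < q" "Lh \<le> real k * Lr" "2 * Lr \<le> Lt" "Lt \<le> Lc + 2 * Lr" "0 \<le> Lc" "0 \<le> Lt"
    and "(q - 1) * L\<epsilon> + \<bar>\<sigma>\<bar> / 2 * Lc \<le> L\<^sub>1" and "\<sigma> / 2 \<le> \<beta> * (q - 1) - 1"
  shows "- \<alpha> * Lr + q * (L\<epsilon> + Lh - \<beta> * Lt) \<le> L\<epsilon> + Lh + L\<^sub>1 - (\<beta> + 1) * Lt"
proof -
  have "(q - 1) * Lh \<le> (q - 1) * (real k * Lr)"
    using assms(2,3) by (intro mult_left_mono) auto
  moreover have "\<sigma> * Lr \<le> \<sigma> / 2 * Lt + \<bar>\<sigma>\<bar> / 2 * Lc"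
    using assms(4-6) by (rule mult_le_half_sum_abs)
  moreover have "\<sigma> / 2 * Lt \<le> (\<beta> * (q - 1) - 1) * Lt"
    using assms(7,9) by (intro mult_right_mono)
  ultimately show ?thesis
    using assms(8) by (simp add: \<sigma>_def algebra_simps)
qed

lemma barrier_source_le:
  fixes r h t c \<epsilon> c\<^sub>1 q \<alpha> \<beta> :: real and k :: nat
  defines "\<sigma> \<equiv> real k * (q - 1) - \<alpha>"
  assumes r: "1 \<le> r" and h: "0 < h" "h \<le> r ^ k" and t: "r\<^sup>2 \<le> t" "t \<le> (c + 1) * r\<^sup>2"
    and c: "0 \<le> c" and q: "1 < q" and \<epsilon>: "0 < \<epsilon>" "\<epsilon> powr (q - 1) * (c + 1) powr (\<bar>\<sigma>\<bar> / 2) \<le> c\<^sub>1"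
    and \<beta>: "\<sigma> / 2 \<le> \<beta> * (q - 1) - 1"
  shows "r powr (- \<alpha>) * (\<epsilon> * h * t powr (- \<beta>)) powr q \<le> \<epsilon> * h * c\<^sub>1 * t powr (- \<beta> - 1)"
proof -
  have "1 \<le> r\<^sup>2"
    using r by (simp add: one_le_power)
  then have t1: "1 \<le> t"
    using t by linarith
  have "0 < \<epsilon> powr (q - 1) * (c + 1) powr (\<bar>\<sigma>\<bar> / 2)"
    using \<epsilon> c by simp
  then have c\<^sub>1: "0 < c\<^sub>1"
    using \<epsilon> by linarith
  have "ln (\<epsilon> powr (q - 1) * (c + 1) powr (\<bar>\<sigma>\<bar> / 2)) \<le> ln c\<^sub>1"
    using \<epsilon> c c\<^sub>1 by (subst ln_le_cancel_iff) auto
  moreover have "ln h \<le> ln (r ^ k)" "ln (r\<^sup>2) \<le> ln t" "ln t \<le> ln ((c + 1) * r\<^sup>2)"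
    using h r t t1 c by (subst ln_le_cancel_iff; auto)+
  ultimately have "- \<alpha> * ln r + q * (ln \<epsilon> + ln h - \<beta> * ln t)
      \<le> ln \<epsilon> + ln h + ln c\<^sub>1 - (\<beta> + 1) * ln t"
    using q r c t1 \<epsilon>(1) \<beta> unfolding \<sigma>_def
    by (intro barrier_source_log_le) (simp_all add: ln_mult ln_powr ln_realpow)
  moreover have "ln (r powr (- \<alpha>) * (\<epsilon> * h * t powr (- \<beta>)) powr q)
      = - \<alpha> * ln r + q * (ln \<epsilon> + ln h - \<beta> * ln t)"
    using r h t1 \<epsilon> by (simp add: ln_mult)
  moreover have "ln (\<epsilon> * h * c\<^sub>1 * t powr (- \<beta> - 1)) = ln \<epsilon> + ln h + ln c\<^sub>1 - (\<beta> + 1) * ln t"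
    using h t1 \<epsilon> c\<^sub>1 by (simp add: ln_mult algebra_simps)
  ultimately show ?thesis
    using r h t1 \<epsilon> c\<^sub>1 by (subst ln_le_cancel_iff[symmetric]) auto
qed

lemma exists_powr_neg_eq:
  assumes "1 < \<Lambda>" "0 < e"
  obtains \<mu> :: real where "0 < \<mu>" "\<mu> < 1" "\<mu> powr (- e) = \<Lambda>"
proof
  show "0 < \<Lambda> powr (- 1 / e)" "\<Lambda> powr (- 1 / e) < 1"
    using assms by (auto intro!: powr_less_one)
  have "(\<Lambda> powr (- 1 / e)) powr (- e) = \<Lambda> powr (- 1 / e * - e)"
    by (rule powr_powr)
  then show "(\<Lambda> powr (- 1 / e)) powr (- e) = \<Lambda>"
    using assms by simp
qed

text \<open>\<open>\<beta> < d/2 + k - 1\<close> keeps the barrier superharmonic, while the lower bound on \<open>\<beta>\<close> makes the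
  nonlinear term decay fast enough; the exponent condition is exactly what leaves room between them.\<close>

lemma barrier_parameters:
  assumes "1 \<le> k" "k \<le> d" "1 < q"
    and cond: "real d + real k < \<alpha> + q * (real d + real k - 2)"
  obtains \<beta> \<mu> where "0 < \<beta>" "0 < \<mu>" "\<mu> < 1"
    and "(real k * (q - 1) - \<alpha>) / 2 \<le> \<beta> * (q - 1) - 1"
    and "4 * (\<beta> + 1) * \<mu> powr (- \<beta> - 2) < 2 * real d + 4 * real k"
proof -
  define \<beta>\<^sub>0 where "\<beta>\<^sub>0 = max 0 ((2 + real k * (q - 1) - \<alpha>) / (2 * (q - 1)))"
  define \<beta>\<^sub>1 where "\<beta>\<^sub>1 = real d / 2 + real k - 1"
  have "2 + real k * (q - 1) - \<alpha> < \<beta>\<^sub>1 * (2 * (q - 1))"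
    using cond by (simp add: \<beta>\<^sub>1_def algebra_simps)
  then have "(2 + real k * (q - 1) - \<alpha>) / (2 * (q - 1)) < \<beta>\<^sub>1"
    using assms(3) by (simp add: divide_less_eq)
  moreover have "0 < \<beta>\<^sub>1"
    using assms(1,2) by (simp add: \<beta>\<^sub>1_def)
  ultimately have "0 \<le> \<beta>\<^sub>0" "\<beta>\<^sub>0 < \<beta>\<^sub>1"
    by (simp_all add: \<beta>\<^sub>0_def)
  define \<beta> where "\<beta> = (\<beta>\<^sub>0 + \<beta>\<^sub>1) / 2"
  have \<beta>: "0 < \<beta>" "\<beta>\<^sub>0 < \<beta>" "\<beta> < \<beta>\<^sub>1"
    using \<open>0 \<le> \<beta>\<^sub>0\<close> \<open>\<beta>\<^sub>0 < \<beta>\<^sub>1\<close> by (simp_all add: \<beta>_def)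
  have "(2 + real k * (q - 1) - \<alpha>) / (2 * (q - 1)) < \<beta>"
    using \<beta>(2) by (simp add: \<beta>\<^sub>0_def)
  then have "2 + real k * (q - 1) - \<alpha> \<le> \<beta> * (2 * (q - 1))"
    using assms(3) pos_divide_less_eq[of "2 * (q - 1)"] by simp
  then have exponent: "(real k * (q - 1) - \<alpha>) / 2 \<le> \<beta> * (q - 1) - 1"
    by (simp add: field_simps)
  define \<Lambda> where "\<Lambda> = (1 + (real d / 2 + real k) / (\<beta> + 1)) / 2"
  have "1 < \<Lambda>"
    using \<beta> by (simp add: \<Lambda>_def \<beta>\<^sub>1_def field_simps)
  then obtain \<mu> where \<mu>: "0 < \<mu>" "\<mu> < 1" "\<mu> powr (- (\<beta> + 2)) = \<Lambda>"
    using \<beta>(1) exists_powr_neg_eq[of \<Lambda> "\<beta> + 2"] by auto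
  have "4 * (\<beta> + 1) * \<Lambda> = 2 * \<beta> + 2 + real d + 2 * real k"
    using \<beta> by (simp add: \<Lambda>_def field_simps)
  then have "4 * (\<beta> + 1) * \<mu> powr (- \<beta> - 2) < 2 * real d + 4 * real k"
    using \<beta>(3) \<mu>(3) by (simp add: \<beta>\<^sub>1_def)
  then show ?thesis
    using that \<beta>(1) \<mu>(1,2) exponent by blast
qed

lemma scaled_barrier_supersolution:
  assumes x: "x \<in> orthant d k" and k: "1 \<le> k" "k \<le> d" and q: "1 < q"
    and \<beta>: "0 < \<beta>" and \<mu>: "0 < \<mu>" "\<mu> < 1"
    and c: "4 / (1 - \<mu>)\<^sup>2 \<le> c" "2 * real d + 8 * real k \<le> 8 * c"
    and exponent: "(real k * (q - 1) - \<alpha>) / 2 \<le> \<beta> * (q - 1) - 1"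
    and \<epsilon>: "0 < \<epsilon>" "\<epsilon> powr (q - 1) * (c + 1) powr (\<bar>real k * (q - 1) - \<alpha>\<bar> / 2)
      \<le> \<beta> * ((2 * real d + 4 * real k) - 4 * (\<beta> + 1) * \<mu> powr (- \<beta> - 2)) / (2 * real d)"
  shows "enorm d x powr (- \<alpha>) * (\<epsilon> * barrier d k c \<beta> x) powr q
    \<le> - lap d (\<lambda>y. \<epsilon> * barrier d k c \<beta> y) x"
proof -
  define t where "t = c + sqnorm d x"
  define c\<^sub>1 where "c\<^sub>1 = \<beta> * ((2 * real d + 4 * real k) - 4 * (\<beta> + 1) * \<mu> powr (- \<beta> - 2)) / (2 * real d)"
  have "0 \<le> c"
    using c(2) by linarith
  have r: "1 \<le> enorm d x"
    using one_le_enorm[OF x k] .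
  then have "1 \<le> sqnorm d x"
    using enorm_sq[of d x] by (metis one_le_power)
  then have t: "(enorm d x)\<^sup>2 \<le> t" "t \<le> (c + 1) * (enorm d x)\<^sup>2"
    using \<open>0 \<le> c\<close> mult_left_mono[of 1 "sqnorm d x" c] by (auto simp: t_def enorm_sq algebra_simps)
  have "enorm d x powr (- \<alpha>) * (\<epsilon> * barrier d k c \<beta> x) powr q \<le> \<epsilon> * coord_prod k x * c\<^sub>1 * t powr (- \<beta> - 1)"
    using barrier_source_le[OF r coord_prod_pos[OF x] coord_prod_le_enorm_power[OF x k(2)] t \<open>0 \<le> c\<close> q \<epsilon>(1)
        \<epsilon>(2)[folded c\<^sub>1_def] exponent]
    by (simp add: barrier_def t_def mult.assoc)
  also have "\<dots> \<le> \<epsilon> * - lap d (barrier d k c \<beta>) x"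
  proof -
    have "c\<^sub>1 * coord_prod k x * t powr (- \<beta> - 1) \<le> - lap d (barrier d k c \<beta>) x"
      using lap_barrier_le[OF x k(2) \<beta> \<mu> c] by (simp add: c\<^sub>1_def t_def)
    then have "\<epsilon> * (c\<^sub>1 * coord_prod k x * t powr (- \<beta> - 1)) \<le> \<epsilon> * - lap d (barrier d k c \<beta>) x"
      by (rule mult_left_mono) (use \<epsilon>(1) in simp)
    then show ?thesis
      by (simp add: mult_ac)
  qed
  finally show ?thesis
    by (simp add: lap_scale)
qed

theorem exists_positive_supersolution:
  assumes k: "1 \<le> k" "k \<le> d" and q: "1 < q"
    and cond: "real d + real k < \<alpha> + q * (real d + real k - 2)"
  shows "\<exists>u. (\<forall>x\<in>orthant d k. u x > 0 \<and> - lap d u x \<ge> enorm d x powr (- \<alpha>) * u x powr q)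
    \<and> (\<forall>y\<in>boundary d (orthant d k). u y = 0)"
proof -
  obtain \<beta> \<mu> where \<beta>: "0 < \<beta>" and \<mu>: "0 < \<mu>" "\<mu> < 1"
    and exponent: "(real k * (q - 1) - \<alpha>) / 2 \<le> \<beta> * (q - 1) - 1"
    and decay: "4 * (\<beta> + 1) * \<mu> powr (- \<beta> - 2) < 2 * real d + 4 * real k"
    using barrier_parameters[OF k q cond] by blast
  define c where "c = 4 / (1 - \<mu>)\<^sup>2 + real d + real k"
  have c: "4 / (1 - \<mu>)\<^sup>2 \<le> c" "2 * real d + 8 * real k \<le> 8 * c"
    by (simp_all add: c_def)
  have "0 < c"
    unfolding c_def using \<mu> by (intro add_pos_nonneg) simp_all
  define c\<^sub>1 where "c\<^sub>1 = \<beta> * ((2 * real d + 4 * real k) - 4 * (\<beta> + 1) * \<mu> powr (- \<beta> - 2)) / (2 * real d)"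
  have "0 < c\<^sub>1"
    using \<beta> decay k by (simp add: c\<^sub>1_def)
  define s where "s = (c + 1) powr (\<bar>real k * (q - 1) - \<alpha>\<bar> / 2)"
  define \<epsilon> where "\<epsilon> = (c\<^sub>1 / s) powr (1 / (q - 1))"
  have "0 < s"
    using \<open>0 < c\<close> by (simp add: s_def)
  then have \<epsilon>: "0 < \<epsilon>" "\<epsilon> powr (q - 1) * s \<le> c\<^sub>1"
    using \<open>0 < c\<^sub>1\<close> q by (simp_all add: \<epsilon>_def powr_powr)
  define u where "u = (\<lambda>y. \<epsilon> * barrier d k c \<beta> y)"
  have "u x > 0 \<and> - lap d u x \<ge> enorm d x powr (- \<alpha>) * u x powr q" if x: "x \<in> orthant d k" for x
  proof
    have "0 < c + sqnorm d x"
      using \<open>0 < c\<close> by (simp add: add_pos_nonneg sqnorm_nonneg)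
    then show "u x > 0"
      using coord_prod_pos[OF x] \<epsilon>(1) by (simp add: u_def barrier_def)
    show "- lap d u x \<ge> enorm d x powr (- \<alpha>) * u x powr q"
      unfolding u_def using scaled_barrier_supersolution[OF x k q \<beta> \<mu> c exponent] \<epsilon>
      by (simp add: s_def c\<^sub>1_def)
  qed
  moreover have "u y = 0" if "y \<in> boundary d (orthant d k)" for y
    using coord_prod_boundary[OF that] by (simp add: u_def barrier_def)
  ultimately show ?thesis
    by blast
qed

theorem positive_supersolution_imp_exponent:
  assumes "1 \<le> k" "k \<le> d" "1 < q" "0 \<le> \<alpha>"
    and "\<forall>x\<in>orthant d k. u x > 0 \<and> - lap d u x \<ge> enorm d x powr (- \<alpha>) * u x powr q"
    and "\<forall>y\<in>boundary d (orthant d k). u y = 0"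
  shows "real d + real k < \<alpha> + q * (real d + real k - 2)"
proof -
  interpret orthant_supersolution d k q \<alpha> u "nat \<lceil>q / (q - 1)\<rceil>"
    using assms by unfold_locales (auto intro: real_nat_ceiling_ge)
  show ?thesis
    by (rule exponent_condition)
qed

text \<open>Both directions hold for every \<open>d \<ge> 1\<close>.\<close>

theorem corollary8p6:
  fixes d k :: nat and q \<alpha> :: real
  assumes "d \<ge> 3" and "1 \<le> k" and "k \<le> d" and "q > 1" and "\<alpha> \<ge> 0"
  shows "(\<exists>u :: (nat \<Rightarrow> int) \<Rightarrow> real.
            (\<forall>x\<in>orthant d k. u x > 0 \<and>
               - lap d u x \<ge> enorm d x powr (- \<alpha>) * u x powr q) \<and>
            (\<forall>y\<in>boundary d (orthant d k). u y = 0))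
         \<longleftrightarrow> \<alpha> + q * (real d + real k - 2) > real d + real k"
  using positive_supersolution_imp_exponent[OF assms(2-5)] exists_positive_supersolution[OF assms(2-4)]
  by blast

end
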